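(* Let $\kappa,\kappa'$ be symmetric weights and $m\ge1$ an integer with $\kappa\equiv\kappa'\bmod p^m(p-1)$ in $\mathbb{Z}^{rn}$. Assume (i) $\min(\kappa^\tau_i-\kappa^\tau_{i+1},\kappa'^\tau_i-\kappa'^\tau_{i+1})>m$ for all $\tau\in\Sigma$ and $1\le i<a_{+\tau}$ with $\kappa^\tau_i-\kappa^\tau_{i+1}\ne\kappa'^\tau_i-\kappa'^\tau_{i+1}$; and (ii) $\min(\kappa^\tau_{a_{+\tau}},\kappa'^\tau_{a_{+\tau}})>m$ for all $\tau\in\Sigma$ with $\kappa^\tau_{a_{+\tau}}\ne\kappa'^\tau_{a_{+\tau}}$. Then $\theta^\kappa\equiv\theta^{\kappa'}\bmod p^{m+1}$, i.e. $\theta^\kappa(f)-\theta^{\kappa'}(f)\in p^{m+1}\mathbb W[[t_l\mid l\in\mathfrak E^\vee]]$ for all $f$.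
   Context: $K^+$ totally real of degree $r$, $K$ CM, $\Sigma$ a CM type ($|\Sigma|=r$), $p>n$ a prime split completely in $K$, $\mathbb W=W(\overline{\mathbb F}_p)$, signature $(a_{+\tau},a_{-\tau})_{\tau\in\Sigma}$ with $a_{+\tau}+a_{-\tau}=n$. A weight $\kappa=(\kappa^\tau_i)_{\tau\in\Sigma,1\le i\le n}\in\mathbb{Z}^{rn}$ is positive dominant if $\kappa^\tau_i\ge\kappa^\tau_{i+1}$ for $i\ne a_{+\tau}$ and all $\kappa^\tau_i\ge0$; sum-symmetric if moreover $\sum_{i\le a_{+\tau}}\kappa^\tau_i=\sum_{i>a_{+\tau}}\kappa^\tau_i$ for all $\tau$ (depth $e=\sum_\tau\sum_{i\le a_{+\tau}}\kappa^\tau_i$); symmetric if sum-symmetric and $\kappa^\tau_i=\kappa^\tau_{a_{+\tau}+i}$ for $1\le i\le\min(a_{+\tau},a_{-\tau})$. Let $\mathfrak E^\vee=\{l^\tau_{i,j}:\tau\in\Sigma,1\le i\le a_{+\tau}<j\le n\}$ index the variables of $\mathbb W[[t_l\mid l\in\mathfrak E^\vee]]$ (the Serre–Tate coordinates at an ordinary point, $\mathcal R$), $\theta_l:=(1+t_l)\partial/\partial t_l$ (these commute). Let $\mathcal L=\oplus_\tau(\mathcal L^+_\tau\oplus\mathcal L^-_\tau)$ free with bases $\mathfrak b_{\tau,1..a_{+\tau}}$ of $\mathcal L^+_\tau$ and $\mathfrak b_{\tau,a_{+\tau}+1..n}$ of $\mathcal L^-_\tau$, $l^\tau_{i,j}$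 identified with the dual of $\mathfrak b_{\tau,i}\otimes\mathfrak b_{\tau,j}$. For sum-symmetric $\kappa$ of depth $e$, $\tilde\ell^\kappa_{\rm can}=\prod(\kappa^\tau_i!)^{-1}\bigotimes_{\tau,i}(\mathfrak b^\vee_{\tau,i})^{\otimes\kappa^\tau_i}\cdot c_\kappa$, $c_\kappa$ the generalized Young symmetrizer (product of Young symmetrizers of the partitions $(\kappa^\tau_1,\dots,\kappa^\tau_{a_{+\tau}})$ and $(\kappa^\tau_{a_{+\tau}+1},\dots,\kappa^\tau_n)$ acting on the right by permuting tensor factors); restricted to $(\oplus_\tau\mathcal L^+_\tau\otimes\mathcal L^-_\tau)^{\otimes e}$ it equals $\sum_{\underline l\in(\mathfrak E^\vee)^e}a_{\kappa,\underline l}\underline l$ with $a_{\kappa,\underline l}\in\{0,\pm1\}$. The operator $\theta^\kappa$ on $\mathbb W[[t_l]]$ is $\theta^\kappa=\sum_{\underline l=(l_1,\dots,l_e)}a_{\kappa,\underline l}\,\theta_{l_e}\circ\cdots\circ\theta_{l_1}$. *)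

theory Defs
  imports "HOL-Combinatorics.Combinatorics" "HOL-Number_Theory.Cong"
begin

text \<open>CM type Sigma is indexed by tau in {0..<r}; a tau is a_{+tau}; weights
  kappa :: nat => nat => int, kappa tau i for tau < r and 1 <= i <= n.
  Serre-Tate variables l^tau_{i,j} are triples (tau,i,j).\<close>

type_synonym var = "nat \<times> nat \<times> nat"

definition Evee :: "nat \<Rightarrow> nat \<Rightarrow> (nat \<Rightarrow> nat) \<Rightarrow> var set" where
  "Evee r n a = {(t,i,j). t < r \<and> 1 \<le> i \<and> i \<le> a t \<and> a t < j \<and> j \<le> n}"

definition pos_dominant :: "nat \<Rightarrow> nat \<Rightarrow> (nat \<Rightarrow> nat) \<Rightarrow> (nat \<Rightarrow> nat \<Rightarrow> int) \<Rightarrow> bool" where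
  "pos_dominant r n a k \<longleftrightarrow>
     (\<forall>t<r. (\<forall>i. 1 \<le> i \<and> i < n \<and> i \<noteq> a t \<longrightarrow> k t i \<ge> k t (i+1))
          \<and> (\<forall>i. 1 \<le> i \<and> i \<le> n \<longrightarrow> k t i \<ge> 0))"

definition sum_symmetric :: "nat \<Rightarrow> nat \<Rightarrow> (nat \<Rightarrow> nat) \<Rightarrow> (nat \<Rightarrow> nat \<Rightarrow> int) \<Rightarrow> bool" where
  "sum_symmetric r n a k \<longleftrightarrow> pos_dominant r n a k \<and>
     (\<forall>t<r. (\<Sum>i=1..a t. k t i) = (\<Sum>i=a t + 1..n. k t i))"

definition symmetric_weight :: "nat \<Rightarrow> nat \<Rightarrow> (nat \<Rightarrow> nat) \<Rightarrow> (nat \<Rightarrow> nat \<Rightarrow> int) \<Rightarrow> bool" where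
  "symmetric_weight r n a k \<longleftrightarrow> sum_symmetric r n a k \<and>
     (\<forall>t<r. \<forall>i. 1 \<le> i \<and> i \<le> min (a t) (n - a t) \<longrightarrow> k t i = k t (a t + i))"

definition depth_tau :: "(nat \<Rightarrow> nat) \<Rightarrow> (nat \<Rightarrow> nat \<Rightarrow> int) \<Rightarrow> nat \<Rightarrow> nat" where
  "depth_tau a k t = nat (\<Sum>i=1..a t. k t i)"

definition depth :: "nat \<Rightarrow> (nat \<Rightarrow> nat) \<Rightarrow> (nat \<Rightarrow> nat \<Rightarrow> int) \<Rightarrow> nat" where
  "depth r a k = (\<Sum>t<r. depth_tau a k t)"

definition offset :: "(nat \<Rightarrow> nat) \<Rightarrow> (nat \<Rightarrow> nat \<Rightarrow> int) \<Rightarrow> nat \<Rightarrow> nat" where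
  "offset a k t = (\<Sum>s<t. depth_tau a k s)"

definition lam_plus :: "(nat \<Rightarrow> nat) \<Rightarrow> (nat \<Rightarrow> nat \<Rightarrow> int) \<Rightarrow> nat \<Rightarrow> nat list" where
  "lam_plus a k t = map (\<lambda>i. nat (k t i)) [1..<a t + 1]"

definition lam_minus :: "nat \<Rightarrow> (nat \<Rightarrow> nat) \<Rightarrow> (nat \<Rightarrow> nat \<Rightarrow> int) \<Rightarrow> nat \<Rightarrow> nat list" where
  "lam_minus n a k t = map (\<lambda>i. nat (k t i)) [a t + 1..<n + 1]"

text \<open>Positions 0..<|lam| of the Young diagram of lam are filled row by row.\<close>
definition row_start :: "nat list \<Rightarrow> nat \<Rightarrow> nat" where
  "row_start lam i = sum_list (take i lam)"

definition row_of :: "nat list \<Rightarrow> nat \<Rightarrow> nat" where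
  "row_of lam q = (LEAST i. q < row_start lam (Suc i))"

definition col_of :: "nat list \<Rightarrow> nat \<Rightarrow> nat" where
  "col_of lam q = q - row_start lam (row_of lam q)"

definition row_group :: "nat list \<Rightarrow> (nat \<Rightarrow> nat) set" where
  "row_group lam = {s. s permutes {0..<sum_list lam} \<and> (\<forall>q. row_of lam (s q) = row_of lam q)}"

definition col_group :: "nat list \<Rightarrow> (nat \<Rightarrow> nat) set" where
  "col_group lam = {s. s permutes {0..<sum_list lam} \<and> (\<forall>q. col_of lam (s q) = col_of lam q)}"

text \<open>Coefficient of the pure tensor b^vee_{v(0)} (x) ... (x) b^vee_{v(d-1)} in
  (prod_i (lam_i)!)^{-1} * (b^vee_{lab 0})^{lam_0} (x) ... . c_lam, where
  c_lam = (sum_{s in R} s)(sum_{p in C} sign p p) acts on the right by permuting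
  tensor factors: (x_0 (x) ... (x) x_{d-1}).g = x_{g 0} (x) ... (x) x_{g (d-1)}.
  Row i of the diagram carries the label lab i.  The division is exact.\<close>
definition young_coef :: "nat list \<Rightarrow> (nat \<Rightarrow> nat) \<Rightarrow> (nat \<Rightarrow> nat) \<Rightarrow> int" where
  "young_coef lam lab v =
     (\<Sum>s\<in>row_group lam. \<Sum>p\<in>col_group lam.
        if (\<forall>q<sum_list lam. lab (row_of lam (s (p q))) = v q) then sign p else 0)
     div (\<Prod>i<length lam. fact (lam ! i))"

text \<open>The tensor
  (x)_{tau,i} (b^vee_{tau,i})^{kappa_i} . c_kappa is restricted to
  (+)_tau L^+_tau (x) L^-_tau by pairing, inside the tau-block, the q-th factor
  of (L^+_tau)^{(x) e_tau} with the q-th factor of (L^-_tau)^{(x) e_tau}; the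
  tau-blocks occupy consecutive slots in the order tau = 0, 1, ... .\<close>
definition a_coef :: "nat \<Rightarrow> nat \<Rightarrow> (nat \<Rightarrow> nat) \<Rightarrow> (nat \<Rightarrow> nat \<Rightarrow> int) \<Rightarrow> (nat \<Rightarrow> var) \<Rightarrow> int" where
  "a_coef r n a k l =
    (if (\<forall>t<r. \<forall>q<depth_tau a k t. fst (l (offset a k t + q)) = t)
     then (\<Prod>t<r.
             young_coef (lam_plus a k t) (\<lambda>i. i + 1)
                (\<lambda>q. fst (snd (l (offset a k t + q))))
           * young_coef (lam_minus n a k t) (\<lambda>i. a t + 1 + i)
                (\<lambda>q. snd (snd (l (offset a k t + q)))))
     else 0)"

text \<open>Formal power series in the variables t_l: coefficient functions on
  exponent vectors (only exponents supported in Evee are meaningful).\<close>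
type_synonym 'c pseries = "(var \<Rightarrow> nat) \<Rightarrow> 'c"

text \<open>theta_l = (1 + t_l) d/dt_l on coefficients.\<close>
definition theta_var :: "var \<Rightarrow> 'c::comm_ring_1 pseries \<Rightarrow> 'c pseries" where
  "theta_var l f = (\<lambda>\<alpha>. of_nat (\<alpha> l + 1) * f (\<alpha>(l := \<alpha> l + 1)) + of_nat (\<alpha> l) * f \<alpha>)"

fun theta_seq :: "(nat \<Rightarrow> var) \<Rightarrow> nat \<Rightarrow> 'c::comm_ring_1 pseries \<Rightarrow> 'c pseries" where
  "theta_seq l 0 f = f"
| "theta_seq l (Suc q) f = theta_var (l q) (theta_seq l q f)"

definition theta_kappa :: "nat \<Rightarrow> nat \<Rightarrow> (nat \<Rightarrow> nat) \<Rightarrow> (nat \<Rightarrow> nat \<Rightarrow> int)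
    \<Rightarrow> 'c::comm_ring_1 pseries \<Rightarrow> 'c pseries" where
  "theta_kappa r n a k f = (\<lambda>\<alpha>.
     \<Sum>l\<in>({0..<depth r a k} \<rightarrow>\<^sub>E Evee r n a).
        of_int (a_coef r n a k l) * theta_seq l (depth r a k) f \<alpha>)"

end

theory Submission
  imports Defs "HOL-Number_Theory.Number_Theory"
begin

text \<open>The \<open>\<theta>\<^sub>l\<close> commute, so \<open>\<theta>\<^sup>\<kappa> = P\<^sub>\<kappa>(\<theta>)\<close> for the integral polynomial
  \<open>P\<^sub>\<kappa>(x) = \<Sum>\<^sub>l a\<^sub>\<kappa>\<^sub>,\<^sub>l x\<^sub>l\<^sub>1 \<cdots> x\<^sub>l\<^sub>e\<close>.  Expand \<open>P\<^sub>\<kappa> - P\<^sub>\<kappa>\<^sub>'\<close> in the basis \<open>\<Prod>\<^sub>l binom(x\<^sub>l, J\<^sub>l)\<close>: since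
  \<open>binom(\<theta>\<^sub>l, j) = (1 + t\<^sub>l)\<^sup>j \<partial>\<^sup>j/j!\<close> has integral coefficients, it suffices that all coefficients of
  this expansion are divisible by \<open>p\<^sup>m\<^sup>+\<^sup>1\<close>, and by Newton interpolation this follows from
  \<open>P\<^sub>\<kappa>(x) \<equiv> P\<^sub>\<kappa>\<^sub>'(x) mod p\<^sup>m\<^sup>+\<^sup>1\<close> for all \<open>x \<in> \<nat>\<^sup>E\<close>.

  Expanding the Young symmetrizers, \<open>P\<^sub>\<kappa>(x)\<close> factors over the columns of the Young
  diagrams; because \<open>\<kappa>\<close> is symmetric the plus and minus diagrams of each block have the same
  column groups, and a column of height \<open>h\<close> contributes \<open>h! det(X\<^sub>h)\<close>, where \<open>X\<^sub>h\<close> is the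
  leading \<open>h \<times> h\<close> minor of the matrix \<open>x(l\<^sup>\<tau>\<^sub>i\<^sub>,\<^sub>j)\<close>, \<open>i \<le> a\<^sub>\<tau> < j\<close>.  Hence \<open>P\<^sub>\<kappa>(x) = \<Prod>\<^sub>\<tau> \<Prod>\<^sub>h (h! det X\<^sub>h) ^ N\<^sub>h\<close>
  with \<open>N\<^sub>h = \<kappa>\<^sub>h - \<kappa>\<^sub>h\<^sub>+\<^sub>1\<close> for \<open>h < a\<^sub>\<tau>\<close> and \<open>N\<^sub>a = \<kappa>\<^sub>a\<close>.  The hypotheses give
  \<open>N\<^sub>h \<equiv> N'\<^sub>h mod p\<^sup>m(p - 1)\<close>, and that both exceed \<open>m\<close> when they differ; Euler's theorem
  then gives \<open>y ^ N\<^sub>h \<equiv> y ^ N'\<^sub>h mod p\<^sup>m\<^sup>+\<^sup>1\<close> for every integer \<open>y\<close>.\<close>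

section \<open>Binomial operators in \<open>\<theta>\<close>\<close>

text \<open>On coefficient functions, \<open>mult_one_plus_t v\<close> is multiplication by \<open>1 + t\<^sub>v\<close> and
  \<open>divided_deriv v j\<close> is \<open>\<partial>\<^sup>j/\<partial>t\<^sub>v\<^sup>j\<close> divided by \<open>j!\<close>; their composite \<open>binom_theta v j\<close>
  is \<open>binom(\<theta>\<^sub>v, j)\<close>.\<close>

definition mult_one_plus_t :: "var \<Rightarrow> 'c::comm_ring_1 pseries \<Rightarrow> 'c pseries" where
  "mult_one_plus_t v g = (\<lambda>\<alpha>. g \<alpha> + (if 0 < \<alpha> v then g (\<alpha>(v := \<alpha> v - 1)) else 0))"

definition divided_deriv :: "var \<Rightarrow> nat \<Rightarrow> 'c::comm_ring_1 pseries \<Rightarrow> 'c pseries" where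
  "divided_deriv v j g = (\<lambda>\<alpha>. of_nat ((\<alpha> v + j) choose j) * g (\<alpha>(v := \<alpha> v + j)))"

definition binom_theta :: "var \<Rightarrow> nat \<Rightarrow> 'c::comm_ring_1 pseries \<Rightarrow> 'c pseries" where
  "binom_theta v j g = (mult_one_plus_t v ^^ j) (divided_deriv v j g)"

fun binom_theta_prod :: "var list \<Rightarrow> (var \<Rightarrow> nat) \<Rightarrow> 'c::comm_ring_1 pseries \<Rightarrow> 'c pseries" where
  "binom_theta_prod [] J g = g"
| "binom_theta_prod (v # vs) J g = binom_theta v (J v) (binom_theta_prod vs J g)"

lemma theta_var_eq_mult_deriv: "theta_var v g = mult_one_plus_t v (divided_deriv v 1 g)"
  by (auto simp: theta_var_def mult_one_plus_t_def divided_deriv_def fun_eq_iff)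

lemma mult_one_plus_t_lincomb:
  "mult_one_plus_t v (\<lambda>\<alpha>. a * f \<alpha> + b * g \<alpha>) = (\<lambda>\<alpha>. a * mult_one_plus_t v f \<alpha> + b * mult_one_plus_t v g \<alpha>)"
  by (auto simp: mult_one_plus_t_def fun_eq_iff algebra_simps)

lemma divided_deriv_lincomb:
  "divided_deriv v j (\<lambda>\<alpha>. a * f \<alpha> + b * g \<alpha>) = (\<lambda>\<alpha>. a * divided_deriv v j f \<alpha> + b * divided_deriv v j g \<alpha>)"
  by (auto simp: divided_deriv_def fun_eq_iff algebra_simps)

lemma mult_one_plus_t_pow_lincomb:
  "(mult_one_plus_t v ^^ j) (\<lambda>\<alpha>. a * f \<alpha> + b * g \<alpha>)
     = (\<lambda>\<alpha>. a * (mult_one_plus_t v ^^ j) f \<alpha> + b * (mult_one_plus_t v ^^ j) g \<alpha>)"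
  by (induction j) (auto simp: mult_one_plus_t_lincomb)

lemma binom_theta_lincomb:
  "binom_theta v j (\<lambda>\<alpha>. a * f \<alpha> + b * g \<alpha>) = (\<lambda>\<alpha>. a * binom_theta v j f \<alpha> + b * binom_theta v j g \<alpha>)"
  by (simp add: binom_theta_def divided_deriv_lincomb mult_one_plus_t_pow_lincomb)

lemma mult_one_plus_t_pow_scale:
  "(mult_one_plus_t v ^^ j) (\<lambda>\<alpha>. a * f \<alpha>) = (\<lambda>\<alpha>. a * (mult_one_plus_t v ^^ j) f \<alpha>)"
  using mult_one_plus_t_pow_lincomb[where a=a and b=0 and f=f and g=f] by simp

lemma divided_deriv_1_mult_one_plus_t:
  "divided_deriv v 1 (mult_one_plus_t v g) = (\<lambda>\<alpha>. mult_one_plus_t v (divided_deriv v 1 g) \<alpha> + g \<alpha>)"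
proof
  fix \<alpha> :: "var \<Rightarrow> nat"
  show "divided_deriv v 1 (mult_one_plus_t v g) \<alpha> = mult_one_plus_t v (divided_deriv v 1 g) \<alpha> + g \<alpha>"
  proof (cases "\<alpha> v = 0")
    case True
    then show ?thesis by (simp add: divided_deriv_def mult_one_plus_t_def fun_upd_idem)
  next
    case False
    then have "\<alpha>(v := \<alpha> v - 1 + 1) = \<alpha>" by auto
    with False show ?thesis
      by (simp add: divided_deriv_def mult_one_plus_t_def fun_upd_idem algebra_simps of_nat_diff)
  qed
qed

lemma Suc_mult_binomial_shift:
  "(a + 1) * ((a + 1 + j) choose j) = (j + 1) * ((a + j + 1) choose (j + 1))"
proof -
  have "(a + 1) * ((a + 1 + j) choose j) = Suc a * (Suc (a + j) choose Suc a)"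
    using binomial_symmetric[of "Suc a" "Suc (a + j)"] by simp
  also have "\<dots> = Suc (a + j) * ((a + j) choose a)"
    using Suc_times_binomial_eq[of "a + j" a] by simp
  also have "(a + j) choose a = (a + j) choose j"
    using binomial_symmetric[of a "a + j"] by simp
  also have "Suc (a + j) * ((a + j) choose j) = (j + 1) * ((a + j + 1) choose (j + 1))"
    using Suc_times_binomial_eq[of "a + j" j] by simp
  finally show ?thesis .
qed

lemma divided_deriv_1_divided_deriv:
  "divided_deriv v 1 (divided_deriv v j g) = (\<lambda>\<alpha>. of_nat (j + 1) * divided_deriv v (j + 1) g \<alpha>)"
proof
  fix \<alpha> :: "var \<Rightarrow> nat"
  have c: "(of_nat (\<alpha> v + 1) * (of_nat ((\<alpha> v + 1 + j) choose j)) :: 'a::comm_ring_1)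
        = of_nat (j + 1) * of_nat ((\<alpha> v + j + 1) choose (j + 1))"
    by (metis Suc_mult_binomial_shift of_nat_mult)
  have "divided_deriv v 1 (divided_deriv v j g) \<alpha>
      = of_nat (\<alpha> v + 1) * (of_nat ((\<alpha> v + 1 + j) choose j) * g (\<alpha>(v := \<alpha> v + (j+1))))"
    unfolding divided_deriv_def
    by (simp only: fun_upd_same fun_upd_upd choose_one add.assoc add.commute[of 1 j])
  also have "\<dots> = of_nat (j + 1) * (of_nat ((\<alpha> v + (j + 1)) choose (j + 1)) * g (\<alpha>(v := \<alpha> v + (j+1))))"
    using c by (simp only: mult.assoc[symmetric] add.assoc)
  finally show "divided_deriv v 1 (divided_deriv v j g) \<alpha> = (of_nat (j + 1) * divided_deriv v (j + 1) g \<alpha> :: 'a)"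
    by (simp only: divided_deriv_def)
qed

lemma theta_var_mult_one_plus_t_pow:
  "mult_one_plus_t v (divided_deriv v 1 ((mult_one_plus_t v ^^ j) h))
     = (\<lambda>\<alpha>. (mult_one_plus_t v ^^ Suc j) (divided_deriv v 1 h) \<alpha> + of_nat j * (mult_one_plus_t v ^^ j) h \<alpha>)"
proof (induction j)
  case 0
  then show ?case by simp
next
  case (Suc j)
  have "mult_one_plus_t v (divided_deriv v 1 ((mult_one_plus_t v ^^ Suc j) h))
      = mult_one_plus_t v (\<lambda>\<alpha>. mult_one_plus_t v (divided_deriv v 1 ((mult_one_plus_t v ^^ j) h)) \<alpha>
                                 + (mult_one_plus_t v ^^ j) h \<alpha>)"
    by (simp only: funpow.simps o_apply divided_deriv_1_mult_one_plus_t)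
  also have "\<dots> = mult_one_plus_t v (\<lambda>\<alpha>. 1 * (mult_one_plus_t v ^^ Suc j) (divided_deriv v 1 h) \<alpha>
                                 + (of_nat j + 1) * (mult_one_plus_t v ^^ j) h \<alpha>)"
    by (simp only: Suc.IH) (simp add: algebra_simps)
  also have "\<dots> = (\<lambda>\<alpha>. 1 * mult_one_plus_t v ((mult_one_plus_t v ^^ Suc j) (divided_deriv v 1 h)) \<alpha>
                      + (of_nat j + 1) * mult_one_plus_t v ((mult_one_plus_t v ^^ j) h) \<alpha>)"
    by (rule mult_one_plus_t_lincomb)
  also have "\<dots> = (\<lambda>\<alpha>. (mult_one_plus_t v ^^ Suc (Suc j)) (divided_deriv v 1 h) \<alpha>
                      + of_nat (Suc j) * (mult_one_plus_t v ^^ Suc j) h \<alpha>)"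
    by (simp add: algebra_simps)
  finally show ?case .
qed

text \<open>The operator form of \<open>x binom(x, j) = j binom(x, j) + (j + 1) binom(x, j + 1)\<close>.\<close>

lemma theta_var_binom_theta:
  "theta_var v (binom_theta v j h) = (\<lambda>\<alpha>. of_nat j * binom_theta v j h \<alpha> + of_nat (j + 1) * binom_theta v (j + 1) h \<alpha>)"
proof -
  have "theta_var v (binom_theta v j h) = mult_one_plus_t v (divided_deriv v 1 ((mult_one_plus_t v ^^ j) (divided_deriv v j h)))"
    by (simp add: theta_var_eq_mult_deriv binom_theta_def)
  also have "\<dots> = (\<lambda>\<alpha>. (mult_one_plus_t v ^^ Suc j) (divided_deriv v 1 (divided_deriv v j h)) \<alpha>
                      + of_nat j * (mult_one_plus_t v ^^ j) (divided_deriv v j h) \<alpha>)"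
    by (rule theta_var_mult_one_plus_t_pow)
  also have "(mult_one_plus_t v ^^ Suc j) (divided_deriv v 1 (divided_deriv v j h))
      = (\<lambda>\<alpha>. of_nat (j + 1) * binom_theta v (j + 1) h \<alpha>)"
    by (simp only: divided_deriv_1_divided_deriv mult_one_plus_t_pow_scale binom_theta_def Suc_eq_plus1)
  finally show ?thesis by (simp add: binom_theta_def algebra_simps)
qed

lemma theta_var_mult_one_plus_t_commute:
  "u \<noteq> v \<Longrightarrow> theta_var u (mult_one_plus_t v g) = mult_one_plus_t v (theta_var u g)"
  by (auto simp: theta_var_def mult_one_plus_t_def fun_eq_iff fun_upd_twist algebra_simps)

lemma theta_var_divided_deriv_commute:
  "u \<noteq> v \<Longrightarrow> theta_var u (divided_deriv v j g) = divided_deriv v j (theta_var u g)"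
  by (auto simp: theta_var_def divided_deriv_def fun_eq_iff fun_upd_twist algebra_simps)

lemma theta_var_binom_theta_commute:
  assumes "u \<noteq> v"
  shows "theta_var u (binom_theta v j g) = binom_theta v j (theta_var u g)"
proof -
  have pow: "theta_var u ((mult_one_plus_t v ^^ i) g) = (mult_one_plus_t v ^^ i) (theta_var u g)" for i g
    using assms by (induction i) (auto simp: theta_var_mult_one_plus_t_commute)
  show ?thesis
    using assms by (simp add: binom_theta_def pow theta_var_divided_deriv_commute)
qed

lemma binom_theta_prod_cong:
  "(\<And>v. v \<in> set vs \<Longrightarrow> J v = J' v) \<Longrightarrow> binom_theta_prod vs J g = binom_theta_prod vs J' g"
  by (induction vs) auto

lemma binom_theta_prod_0: "binom_theta_prod vs (\<lambda>_. 0) h = h"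
  by (induction vs) (auto simp: binom_theta_def divided_deriv_def fun_eq_iff)

lemma theta_var_binom_theta_prod:
  assumes "u \<in> set vs" "distinct vs"
  shows "theta_var u (binom_theta_prod vs J h)
    = (\<lambda>\<alpha>. of_nat (J u) * binom_theta_prod vs J h \<alpha> + of_nat (J u + 1) * binom_theta_prod vs (J(u := J u + 1)) h \<alpha>)"
  using assms
proof (induction vs)
  case Nil
  then show ?case by simp
next
  case (Cons v vs)
  show ?case
  proof (cases "v = u")
    case True
    with Cons.prems have "u \<notin> set vs" by auto
    then have "binom_theta_prod vs (J(u := J u + 1)) h = binom_theta_prod vs J h"
      by (intro binom_theta_prod_cong) auto
    then show ?thesis unfolding True binom_theta_prod.simps fun_upd_same theta_var_binom_theta by simp
  next
    case False
    with Cons.prems have ih: "theta_var u (binom_theta_prod vs J h)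
        = (\<lambda>\<alpha>. of_nat (J u) * binom_theta_prod vs J h \<alpha> + of_nat (J u + 1) * binom_theta_prod vs (J(u := J u + 1)) h \<alpha>)"
      by (intro Cons.IH) auto
    have "theta_var u (binom_theta_prod (v # vs) J h) = binom_theta v (J v) (theta_var u (binom_theta_prod vs J h))"
      using False by (simp add: theta_var_binom_theta_commute)
    also have "\<dots> = (\<lambda>\<alpha>. of_nat (J u) * binom_theta v (J v) (binom_theta_prod vs J h) \<alpha>
                     + of_nat (J u + 1) * binom_theta v (J v) (binom_theta_prod vs (J(u := J u + 1)) h) \<alpha>)"
      by (simp only: ih binom_theta_lincomb)
    moreover have "(J(u := J u + 1)) v = J v" using False by simp
    ultimately show ?thesis by (simp only: binom_theta_prod.simps)
  qed
qed

section \<open>Polynomials in \<open>\<theta>\<close> in the binomial basis\<close>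

definition exponent_box :: "var set \<Rightarrow> nat \<Rightarrow> (var \<Rightarrow> nat) set" where
  "exponent_box S D = {J. \<forall>v. (v \<in> S \<longrightarrow> J v \<in> {..D}) \<and> (v \<notin> S \<longrightarrow> J v = 0)}"

lemma finite_exponent_box: "finite S \<Longrightarrow> finite (exponent_box S D)"
  unfolding exponent_box_def by (rule finite_set_of_finite_funs) auto

lemma exponent_box_iff: "J \<in> exponent_box S D \<longleftrightarrow> (\<forall>v. (v \<in> S \<longrightarrow> J v \<le> D) \<and> (v \<notin> S \<longrightarrow> J v = 0))"
  by (auto simp: exponent_box_def)

lemma zero_in_exponent_box: "(\<lambda>_. 0) \<in> exponent_box S D"
  by (simp add: exponent_box_iff)

lemma exponent_box_mono: "D \<le> D' \<Longrightarrow> J \<in> exponent_box S D \<Longrightarrow> J \<in> exponent_box S D'"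
  unfolding exponent_box_iff by (meson le_trans)

text \<open>A coefficient function \<open>c\<close> on the exponents \<open>J \<in> exponent_box S D\<close> encodes the integral
  polynomial \<open>\<Sum>\<^sub>J c J \<Prod>\<^sub>v\<^sub>\<in>\<^sub>S binom(x\<^sub>v, J v)\<close>: \<open>binom_poly_op\<close> substitutes \<open>\<theta>\<^sub>v\<close> for \<open>x\<^sub>v\<close> (the list
  \<open>vs\<close> enumerates \<open>S\<close>), \<open>binom_poly_value\<close> evaluates at a point \<open>x\<close>, and \<open>mult_var_coeffs u c\<close>
  encodes the product with \<open>x\<^sub>u\<close>.\<close>

definition binom_poly_op :: "var list \<Rightarrow> var set \<Rightarrow> nat \<Rightarrow> ((var \<Rightarrow> nat) \<Rightarrow> int) \<Rightarrow> 'c::comm_ring_1 pseries \<Rightarrow> 'c pseries" where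
  "binom_poly_op vs S D c f = (\<lambda>\<alpha>. \<Sum>J\<in>exponent_box S D. of_int (c J) * binom_theta_prod vs J f \<alpha>)"

definition binom_poly_value :: "var set \<Rightarrow> nat \<Rightarrow> ((var \<Rightarrow> nat) \<Rightarrow> int) \<Rightarrow> (var \<Rightarrow> nat) \<Rightarrow> int" where
  "binom_poly_value S D c x = (\<Sum>J\<in>exponent_box S D. c J * (\<Prod>v\<in>S. int (x v choose J v)))"

definition mult_var_coeffs :: "var \<Rightarrow> ((var \<Rightarrow> nat) \<Rightarrow> int) \<Rightarrow> ((var \<Rightarrow> nat) \<Rightarrow> int)" where
  "mult_var_coeffs u c = (\<lambda>J. int (J u) * c J + (if 0 < J u then int (J u) * c (J(u := J u - 1)) else 0))"

lemma sum_exponent_box_shift: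
  fixes G :: "(var \<Rightarrow> nat) \<Rightarrow> 'b::comm_ring_1"
  assumes fin: "finite S" and u: "u \<in> S"
    and van: "\<And>J. J \<in> exponent_box S D \<Longrightarrow> J u = D \<Longrightarrow> G J = 0"
  shows "(\<Sum>J\<in>exponent_box S D. if 0 < J u then G (J(u := J u - 1)) else 0) = (\<Sum>J\<in>exponent_box S D. G J)"
proof -
  let ?B = "exponent_box S D"
  have finB: "finite ?B" using fin by (rule finite_exponent_box)
  have "(\<Sum>J\<in>?B. if 0 < J u then G (J(u := J u - 1)) else 0) = (\<Sum>J\<in>{J\<in>?B. 0 < J u}. G (J(u := J u - 1)))"
    by (simp only: sum.inter_filter[OF finB])
  also have "\<dots> = (\<Sum>J\<in>{J\<in>?B. J u < D}. G J)"
  proof (rule sum.reindex_bij_witness[where i = "\<lambda>J. J(u := J u + 1)" and j = "\<lambda>J. J(u := J u - 1)"])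
    fix J assume J: "J \<in> {J\<in>?B. 0 < J u}"
    then show "(J(u := J u - 1))(u := (J(u := J u - 1)) u + 1) = J" by auto
    from J have "J u \<le> D" using u unfolding exponent_box_iff by blast
    then show "J(u := J u - 1) \<in> {J\<in>?B. J u < D}"
      using J u by (auto simp: exponent_box_iff)
  next
    fix J assume J: "J \<in> {J\<in>?B. J u < D}"
    then show "(J(u := J u + 1))(u := (J(u := J u + 1)) u - 1) = J" by auto
    show "J(u := J u + 1) \<in> {J\<in>?B. 0 < J u}"
      using J u by (auto simp: exponent_box_iff)
  qed simp
  also have "\<dots> = (\<Sum>J\<in>?B. G J)"
  proof (rule sum.mono_neutral_left[OF finB])
    show "\<forall>J\<in>?B - {J \<in> ?B. J u < D}. G J = 0"
    proof
      fix J assume J: "J \<in> ?B - {J \<in> ?B. J u < D}"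
      then have "J \<in> ?B" "\<not> J u < D" by auto
      moreover from this have "J u \<le> D" using u unfolding exponent_box_iff by blast
      ultimately show "G J = 0" using van by simp
    qed
  qed auto
  finally show ?thesis .
qed

lemma sum_mult_var_coeffs:
  fixes g :: "(var \<Rightarrow> nat) \<Rightarrow> 'b::comm_ring_1"
  assumes fin: "finite S" and u: "u \<in> S"
    and van: "\<And>J. J \<in> exponent_box S D \<Longrightarrow> J u = D \<Longrightarrow> c J = 0"
  shows "(\<Sum>J\<in>exponent_box S D. of_int (mult_var_coeffs u c J) * g J)
       = (\<Sum>J\<in>exponent_box S D. of_int (c J) * (of_nat (J u) * g J + of_nat (J u + 1) * g (J(u := J u + 1))))"
proof -
  let ?B = "exponent_box S D"
  let ?G = "\<lambda>J. of_int (c J) * of_nat (J u + 1) * g (J(u := J u + 1))"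
  have shift: "(if 0 < J u then of_nat (J u) * of_int (c (J(u := J u - 1))) * g J else 0)
      = (if 0 < J u then ?G (J(u := J u - 1)) else 0)" for J
    by (cases "J u") (simp_all add: fun_upd_idem algebra_simps)
  have "(\<Sum>J\<in>?B. of_int (mult_var_coeffs u c J) * g J)
      = (\<Sum>J\<in>?B. of_int (c J) * of_nat (J u) * g J)
        + (\<Sum>J\<in>?B. if 0 < J u then of_nat (J u) * of_int (c (J(u := J u - 1))) * g J else 0)"
    unfolding sum.distrib[symmetric] by (rule sum.cong) (auto simp: mult_var_coeffs_def algebra_simps)
  also have "\<dots> = (\<Sum>J\<in>?B. of_int (c J) * of_nat (J u) * g J) + (\<Sum>J\<in>?B. ?G J)"
    unfolding shift using sum_exponent_box_shift[OF fin u, of D ?G] van by simp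
  also have "\<dots> = (\<Sum>J\<in>?B. of_int (c J) * (of_nat (J u) * g J + of_nat (J u + 1) * g (J(u := J u + 1))))"
    by (simp add: sum.distrib[symmetric] algebra_simps)
  finally show ?thesis .
qed

lemma theta_var_sum: "theta_var u (\<lambda>\<alpha>. \<Sum>J\<in>B. a J * F J \<alpha>) = (\<lambda>\<alpha>. \<Sum>J\<in>B. a J * theta_var u (F J) \<alpha>)"
  by (auto simp: theta_var_def fun_eq_iff sum_distrib_left sum.distrib algebra_simps)

lemma theta_var_binom_poly_op:
  assumes "set vs = S" "distinct vs" "u \<in> S" "finite S"
    and van: "\<And>J. J \<in> exponent_box S D \<Longrightarrow> J u = D \<Longrightarrow> c J = 0"
  shows "theta_var u (binom_poly_op vs S D c f) = binom_poly_op vs S D (mult_var_coeffs u c) f"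
proof
  fix \<alpha>
  have "theta_var u (binom_poly_op vs S D c f) \<alpha> = (\<Sum>J\<in>exponent_box S D. of_int (c J) * theta_var u (binom_theta_prod vs J f) \<alpha>)"
    unfolding binom_poly_op_def by (simp only: theta_var_sum)
  also have "\<dots> = (\<Sum>J\<in>exponent_box S D. of_int (c J) * (of_nat (J u) * binom_theta_prod vs J f \<alpha> + of_nat (J u + 1) * binom_theta_prod vs (J(u := J u + 1)) f \<alpha>))"
    using assms by (simp add: theta_var_binom_theta_prod)
  also have "\<dots> = (\<Sum>J\<in>exponent_box S D. of_int (mult_var_coeffs u c J) * binom_theta_prod vs J f \<alpha>)"
    by (rule sum_mult_var_coeffs[symmetric]) (use assms in auto)
  finally show "theta_var u (binom_poly_op vs S D c f) \<alpha> = binom_poly_op vs S D (mult_var_coeffs u c) f \<alpha>" by (simp add: binom_poly_op_def)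
qed

lemma of_nat_mult_binomial: "int x * int (x choose j) = int j * int (x choose j) + int (j + 1) * int (x choose (j + 1))"
proof -
  have a: "(x - j) * (x choose j) = x * ((x - 1) choose j)" by (rule binomial_absorb_comp)
  have b: "Suc j * (x choose Suc j) = x * ((x - 1) choose j)" by (rule binomial_absorption)
  have "x * (x choose j) = j * (x choose j) + (j + 1) * (x choose (j + 1))"
  proof (cases "j \<le> x")
    case True
    then have "x * (x choose j) = j * (x choose j) + (x - j) * (x choose j)"
      by (metis add_mult_distrib le_add_diff_inverse)
    then show ?thesis using a b by simp
  next
    case False
    then show ?thesis by (simp add: binomial_eq_0)
  qed
  then show ?thesis by (metis of_nat_add of_nat_mult)
qed

lemma binom_poly_value_mult_var:
  assumes "u \<in> S" "finite S"
    and van: "\<And>J. J \<in> exponent_box S D \<Longrightarrow> J u = D \<Longrightarrow> c J = 0"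
  shows "binom_poly_value S D (mult_var_coeffs u c) x = int (x u) * binom_poly_value S D c x"
proof -
  let ?g = "\<lambda>J. (\<Prod>v\<in>S. int (x v choose J v))"
  have g: "int (x u) * ?g J = int (J u) * ?g J + int (J u + 1) * ?g (J(u := J u + 1))" for J
  proof -
    have r: "?g K = int (x u choose K u) * (\<Prod>v\<in>S - {u}. int (x v choose K v))" for K
      using assms by (simp add: prod.remove)
    have "(\<Prod>v\<in>S - {u}. int (x v choose (J(u := J u + 1)) v)) = (\<Prod>v\<in>S - {u}. int (x v choose J v))"
      by (rule prod.cong) auto
    moreover have "(int (x u) * int (x u choose J u)) * (\<Prod>v\<in>S - {u}. int (x v choose J v))
       = (int (J u) * int (x u choose J u) + int (J u + 1) * int (x u choose (J u + 1))) * (\<Prod>v\<in>S - {u}. int (x v choose J v))"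
      using of_nat_mult_binomial[of "x u" "J u"] by (rule arg_cong)
    ultimately show ?thesis unfolding r[of J] r[of "J(u := J u + 1)"]
      by (simp add: algebra_simps)
  qed
  have "binom_poly_value S D (mult_var_coeffs u c) x = (\<Sum>J\<in>exponent_box S D. of_int (mult_var_coeffs u c J) * ?g J)"
    by (simp add: binom_poly_value_def)
  also have "\<dots> = (\<Sum>J\<in>exponent_box S D. of_int (c J) * (of_nat (J u) * ?g J + of_nat (J u + 1) * ?g (J(u := J u + 1))))"
    by (rule sum_mult_var_coeffs) (use assms in auto)
  also have "\<dots> = (\<Sum>J\<in>exponent_box S D. c J * (int (x u) * ?g J))"
    by (simp add: g)
  also have "\<dots> = int (x u) * binom_poly_value S D c x"
    by (simp add: binom_poly_value_def sum_distrib_left algebra_simps)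
  finally show ?thesis .
qed

fun monomial_coeffs :: "(nat \<Rightarrow> var) \<Rightarrow> nat \<Rightarrow> (var \<Rightarrow> nat) \<Rightarrow> int" where
  "monomial_coeffs l 0 = (\<lambda>J. if J = (\<lambda>_. 0) then 1 else 0)"
| "monomial_coeffs l (Suc q) = mult_var_coeffs (l q) (monomial_coeffs l q)"

lemma monomial_coeffs_support: "(\<And>i. i < q \<Longrightarrow> l i \<in> S) \<Longrightarrow> monomial_coeffs l q J \<noteq> 0 \<Longrightarrow> J \<in> exponent_box S q"
proof (induction q arbitrary: J)
  case 0
  then show ?case by (auto simp: zero_in_exponent_box split: if_splits)
next
  case (Suc q)
  let ?u = "l q"
  have u: "?u \<in> S" using Suc.prems by auto
  from Suc.prems(2) have "monomial_coeffs l q J \<noteq> 0 \<or> (0 < J ?u \<and> monomial_coeffs l q (J(?u := J ?u - 1)) \<noteq> 0)"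
    by (auto simp: mult_var_coeffs_def split: if_splits)
  then show ?case
  proof
    assume "monomial_coeffs l q J \<noteq> 0"
    then have "J \<in> exponent_box S q" using Suc by auto
    then show ?thesis by (rule exponent_box_mono[rotated]) simp
  next
    assume a: "0 < J ?u \<and> monomial_coeffs l q (J(?u := J ?u - 1)) \<noteq> 0"
    then have B: "J(?u := J ?u - 1) \<in> exponent_box S q" using Suc by auto
    show ?thesis unfolding exponent_box_iff
    proof (intro allI conjI impI)
      fix v assume "v \<in> S"
      with B have "(J(?u := J ?u - 1)) v \<le> q" unfolding exponent_box_iff by blast
      then show "J v \<le> Suc q" by (cases "v = ?u") auto
    next
      fix v assume v: "v \<notin> S"
      from v u have "v \<noteq> ?u" by auto
      moreover from B v have "(J(?u := J ?u - 1)) v = 0" unfolding exponent_box_iff by blast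
      ultimately show "J v = 0" by simp
    qed
  qed
qed

lemma monomial_coeffs_vanish:
  assumes "\<And>i. i < q \<Longrightarrow> l i \<in> S" "q < D" "J \<in> exponent_box S D" "J u = D" "u \<in> S"
  shows "monomial_coeffs l q J = 0"
proof (rule ccontr)
  assume "monomial_coeffs l q J \<noteq> 0"
  then have "J \<in> exponent_box S q" using monomial_coeffs_support assms(1) by blast
  then have "J u \<le> q" using assms(5) unfolding exponent_box_iff by blast
  then show False using assms by simp
qed

lemma binom_poly_op_unit:
  assumes "finite S"
  shows "binom_poly_op vs S D (monomial_coeffs l 0) f = f"
proof
  fix \<alpha>
  have "binom_poly_op vs S D (monomial_coeffs l 0) f \<alpha> = (\<Sum>J\<in>exponent_box S D. (if J = (\<lambda>_. 0) then binom_theta_prod vs J f \<alpha> else 0))"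
    unfolding binom_poly_op_def by (rule sum.cong) auto
  also have "\<dots> = binom_theta_prod vs (\<lambda>_. 0) f \<alpha>"
    using finite_exponent_box[OF assms] zero_in_exponent_box by (simp add: sum.delta')
  finally show "binom_poly_op vs S D (monomial_coeffs l 0) f \<alpha> = f \<alpha>" by (simp add: binom_theta_prod_0)
qed

lemma binom_poly_value_unit:
  assumes "finite S"
  shows "binom_poly_value S D (monomial_coeffs l 0) x = 1"
proof -
  have "binom_poly_value S D (monomial_coeffs l 0) x = (\<Sum>J\<in>exponent_box S D. (if J = (\<lambda>_. 0) then (\<Prod>v\<in>S. int (x v choose J v)) else 0))"
    unfolding binom_poly_value_def by (rule sum.cong) auto
  also have "\<dots> = 1"
    using finite_exponent_box[OF assms] zero_in_exponent_box by (simp add: sum.delta')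
  finally show ?thesis .
qed

lemma theta_seq_eq_binom_poly_op:
  assumes "set vs = S" "distinct vs" "finite S" "\<And>i. i < q \<Longrightarrow> l i \<in> S" "q \<le> D"
  shows "theta_seq l q f = binom_poly_op vs S D (monomial_coeffs l q) f"
  using assms(4,5)
proof (induction q)
  case 0
  then show ?case by (simp only: theta_seq.simps binom_poly_op_unit[OF assms(3)])
next
  case (Suc q)
  have ih: "theta_seq l q f = binom_poly_op vs S D (monomial_coeffs l q) f" using Suc by auto
  have u: "l q \<in> S" using Suc.prems by auto
  have "theta_seq l (Suc q) f = theta_var (l q) (binom_poly_op vs S D (monomial_coeffs l q) f)" by (simp add: ih)
  also have "\<dots> = binom_poly_op vs S D (mult_var_coeffs (l q) (monomial_coeffs l q)) f"
  proof (rule theta_var_binom_poly_op)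
    fix J assume J: "J \<in> exponent_box S D" "J (l q) = D"
    show "monomial_coeffs l q J = 0" by (rule monomial_coeffs_vanish[where D=D and u="l q", OF _ _ J(1) J(2)]) (use Suc.prems u in auto)
  qed (use assms u in auto)
  finally show ?case by simp
qed

lemma binom_poly_value_monomial:
  assumes "finite S" "\<And>i. i < q \<Longrightarrow> l i \<in> S" "q \<le> D"
  shows "binom_poly_value S D (monomial_coeffs l q) x = (\<Prod>i<q. int (x (l i)))"
  using assms(2,3)
proof (induction q)
  case 0
  then show ?case using binom_poly_value_unit[OF assms(1)] by simp
next
  case (Suc q)
  have ih: "binom_poly_value S D (monomial_coeffs l q) x = (\<Prod>i<q. int (x (l i)))" using Suc by auto
  have u: "l q \<in> S" using Suc.prems by auto
  have "binom_poly_value S D (monomial_coeffs l (Suc q)) x = int (x (l q)) * binom_poly_value S D (monomial_coeffs l q) x"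
  proof -
    have "binom_poly_value S D (mult_var_coeffs (l q) (monomial_coeffs l q)) x = int (x (l q)) * binom_poly_value S D (monomial_coeffs l q) x"
    proof (rule binom_poly_value_mult_var)
      fix J assume J: "J \<in> exponent_box S D" "J (l q) = D"
      show "monomial_coeffs l q J = 0" by (rule monomial_coeffs_vanish[where D=D and u="l q", OF _ _ J(1) J(2)]) (use Suc.prems u in auto)
    qed (use assms u in auto)
    then show ?thesis by simp
  qed
  then show ?case by (simp add: ih)
qed

lemma sum_binom_poly_op:
  "(\<Sum>l\<in>L. of_int (w l) * binom_poly_op vs S D (C l) f \<alpha>) = binom_poly_op vs S D (\<lambda>J. \<Sum>l\<in>L. w l * C l J) f \<alpha>"
  unfolding binom_poly_op_def by (simp add: sum_distrib_left sum_distrib_right of_int_sum algebra_simps sum.swap[of _ L])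

lemma sum_binom_poly_value:
  "(\<Sum>l\<in>L. w l * binom_poly_value S D (C l) x) = binom_poly_value S D (\<lambda>J. \<Sum>l\<in>L. w l * C l J) x"
  unfolding binom_poly_value_def by (simp add: sum_distrib_left sum_distrib_right algebra_simps sum.swap[of _ L])

lemma binom_poly_op_diff: "binom_poly_op vs S D c1 f \<alpha> - binom_poly_op vs S D c2 f \<alpha> = binom_poly_op vs S D (\<lambda>J. c1 J - c2 J) f \<alpha>"
  unfolding binom_poly_op_def by (simp add: sum_subtractf algebra_simps)

lemma binom_poly_value_diff: "binom_poly_value S D c1 x - binom_poly_value S D c2 x = binom_poly_value S D (\<lambda>J. c1 J - c2 J) x"
  unfolding binom_poly_value_def by (simp add: sum_subtractf algebra_simps)

lemma binom_poly_op_dvd: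
  assumes "\<And>J. J \<in> exponent_box S D \<Longrightarrow> int N dvd c J"
  shows "\<exists>y. binom_poly_op vs S D c f \<alpha> = (of_nat N :: 'c::comm_ring_1) * y"
proof -
  have "\<forall>J\<in>exponent_box S D. \<exists>z. c J = int N * z" using assms by (auto simp: dvd_def)
  then obtain z where z: "\<And>J. J \<in> exponent_box S D \<Longrightarrow> c J = int N * z J" by metis
  have "binom_poly_op vs S D c f \<alpha> = (\<Sum>J\<in>exponent_box S D. of_nat N * (of_int (z J) * binom_theta_prod vs J f \<alpha>))"
    unfolding binom_poly_op_def by (rule sum.cong) (auto simp: z)
  also have "\<dots> = of_nat N * (\<Sum>J\<in>exponent_box S D. of_int (z J) * binom_theta_prod vs J f \<alpha>)"
    by (simp add: sum_distrib_left)
  finally show ?thesis by blast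
qed

text \<open>Newton interpolation, by induction on \<open>\<Sum> J\<close>: the value at \<open>x = J\<close> is \<open>c J\<close> plus terms
  \<open>c I\<close> with \<open>I < J\<close>, since \<open>binom(J v, I v)\<close> vanishes for \<open>I v > J v\<close>.\<close>

lemma binom_coeffs_dvd:
  fixes N :: int
  assumes fin: "finite S" and H: "\<And>x. x \<in> exponent_box S D \<Longrightarrow> N dvd binom_poly_value S D c x"
  shows "J \<in> exponent_box S D \<Longrightarrow> N dvd c J"
proof (induction "\<Sum>v\<in>S. J v" arbitrary: J rule: less_induct)
  case less
  let ?B = "exponent_box S D"
  let ?g = "\<lambda>I. (\<Prod>v\<in>S. int (J v choose I v))"
  have finB: "finite ?B" using fin by (rule finite_exponent_box)
  have gJ: "?g J = 1" by simp
  have rest: "N dvd c I * ?g I" if I: "I \<in> ?B - {J}" for I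
  proof (cases "\<forall>v\<in>S. I v \<le> J v")
    case True
    from I have "I \<noteq> J" by auto
    then obtain w where "I w \<noteq> J w" by (meson ext)
    moreover have "w \<in> S"
    proof (rule ccontr)
      assume "w \<notin> S"
      moreover have "I \<in> exponent_box S D" using I by simp
      ultimately have "I w = 0" "J w = 0" using less.prems unfolding exponent_box_iff by blast+
      with \<open>I w \<noteq> J w\<close> show False by simp
    qed
    ultimately have lt: "I w < J w" using True by force
    have "(\<Sum>v\<in>S. I v) < (\<Sum>v\<in>S. J v)"
      using fin True lt \<open>w \<in> S\<close> by (intro sum_strict_mono_ex1) auto
    then have "N dvd c I" using less.hyps I by auto
    then show ?thesis by simp
  next
    case False
    then obtain w where "w \<in> S" "J w < I w" by (auto simp: not_le)
    then have "?g I = 0" using fin by (auto simp: binomial_eq_0 intro: prod_zero)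
    then show ?thesis by simp
  qed
  have "binom_poly_value S D c J = c J * ?g J + (\<Sum>I\<in>?B - {J}. c I * ?g I)"
    unfolding binom_poly_value_def using finB less.prems by (simp add: sum.remove)
  then have "c J = binom_poly_value S D c J - (\<Sum>I\<in>?B - {J}. c I * ?g I)" by simp
  moreover have "N dvd binom_poly_value S D c J" using H less.prems by auto
  moreover have "N dvd (\<Sum>I\<in>?B - {J}. c I * ?g I)" using rest by (intro dvd_sum) auto
  ultimately show ?case by simp
qed

lemma row_start_0 [simp]: "row_start lam 0 = 0"
  by (simp add: row_start_def)

lemma row_start_Suc: "i < length lam \<Longrightarrow> row_start lam (Suc i) = row_start lam i + lam ! i"
  by (simp add: row_start_def take_Suc_conv_app_nth)

lemma row_start_ge_length: "length lam \<le> i \<Longrightarrow> row_start lam i = sum_list lam"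
  by (simp add: row_start_def)

lemma row_start_Suc_le: "row_start lam i \<le> row_start lam (Suc i)"
  by (cases "i < length lam") (auto simp: row_start_Suc row_start_ge_length)

lemma row_start_mono: "i \<le> j \<Longrightarrow> row_start lam i \<le> row_start lam j"
proof (induction j)
  case 0
  then show ?case by simp
next
  case (Suc j)
  show ?case
  proof (cases "i = Suc j")
    case False
    then have "row_start lam i \<le> row_start lam j" using Suc by simp
    then show ?thesis using row_start_Suc_le[of lam j] by linarith
  qed simp
qed

lemma row_start_le_sum_list: "row_start lam i \<le> sum_list lam"
  by (metis row_start_ge_length row_start_mono nat_le_linear order.refl)

lemma row_of_eqI:
  assumes "row_start lam i \<le> q" "q < row_start lam (Suc i)"
  shows "row_of lam q = i"
  unfolding row_of_def
proof (rule Least_equality)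
  show "q < row_start lam (Suc i)" by fact
  fix i' assume "q < row_start lam (Suc i')"
  show "i \<le> i'"
  proof (rule ccontr)
    assume "\<not> i \<le> i'"
    then have "row_start lam (Suc i') \<le> row_start lam i" by (intro row_start_mono) auto
    with assms \<open>q < row_start lam (Suc i')\<close> show False by simp
  qed
qed

lemma row_of_bounds:
  assumes "q < sum_list lam"
  shows "row_of lam q < length lam" "row_start lam (row_of lam q) \<le> q" "q < row_start lam (Suc (row_of lam q))"
proof -
  have ne: "lam \<noteq> []" using assms by auto
  have ex: "q < row_start lam (Suc (length lam - 1))" using assms ne by (simp add: row_start_ge_length)
  let ?i = "row_of lam q"
  show 3: "q < row_start lam (Suc ?i)" unfolding row_of_def by (rule LeastI[of "\<lambda>i. q < row_start lam (Suc i)", OF ex])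
  have "?i \<le> length lam - 1" unfolding row_of_def by (rule Least_le[of "\<lambda>i. q < row_start lam (Suc i)", OF ex])
  then show "?i < length lam" using ne by (cases lam) auto
  show "row_start lam ?i \<le> q"
  proof (cases ?i)
    case 0
    then show ?thesis by simp
  next
    case (Suc i')
    have "\<not> q < row_start lam (Suc i')"
    proof
      assume "q < row_start lam (Suc i')"
      then have "?i \<le> i'" unfolding row_of_def by (rule Least_le)
      then show False using Suc by simp
    qed
    then show ?thesis using Suc by simp
  qed
qed

lemma col_of_less:
  assumes "q < sum_list lam"
  shows "col_of lam q < lam ! row_of lam q"
  using row_of_bounds[OF assms] row_start_Suc[of "row_of lam q" lam] by (simp add: col_of_def)

lemma col_of_le: "col_of lam q \<le> q"
  by (simp add: col_of_def)

lemma row_col_of_cell: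
  assumes "i < length lam" "c < lam ! i"
  shows "row_of lam (row_start lam i + c) = i" "col_of lam (row_start lam i + c) = c"
    "row_start lam i + c < sum_list lam"
proof -
  have s: "row_start lam (Suc i) = row_start lam i + lam ! i" using assms by (simp add: row_start_Suc)
  show r: "row_of lam (row_start lam i + c) = i" by (rule row_of_eqI) (use s assms in auto)
  show "col_of lam (row_start lam i + c) = c" by (simp add: col_of_def r)
  show "row_start lam i + c < sum_list lam" using s assms row_start_le_sum_list[of lam "Suc i"] by simp
qed

section \<open>Permutations preserving the fibres of a map\<close>

definition fiber_perms :: "'a set \<Rightarrow> ('a \<Rightarrow> 'i) \<Rightarrow> ('a \<Rightarrow> 'a) set" where
  "fiber_perms A g = {s. s permutes A \<and> (\<forall>q. g (s q) = g q)}"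

definition fiber :: "'a set \<Rightarrow> ('a \<Rightarrow> 'i) \<Rightarrow> 'i \<Rightarrow> 'a set" where
  "fiber A g j = {q \<in> A. g q = j}"

definition glue_perms :: "'a set \<Rightarrow> ('a \<Rightarrow> 'i) \<Rightarrow> 'i set \<Rightarrow> ('i \<Rightarrow> 'a \<Rightarrow> 'a) \<Rightarrow> 'a \<Rightarrow> 'a" where
  "glue_perms A g I P q = (if q \<in> A \<and> g q \<in> I then P (g q) q else q)"

lemma glue_perms_empty: "glue_perms A g {} P = id"
  by (auto simp: glue_perms_def fun_eq_iff)

lemma glue_perms_insert:
  assumes "i \<notin> I" "P i permutes fiber A g i" "\<And>j. j \<in> I \<Longrightarrow> P j permutes fiber A g j"
  shows "glue_perms A g (insert i I) P = P i \<circ> glue_perms A g I P"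
proof
  fix q
  show "glue_perms A g (insert i I) P q = (P i \<circ> glue_perms A g I P) q"
  proof (cases "q \<in> A \<and> g q \<in> insert i I")
    case True
    show ?thesis
    proof (cases "g q = i")
      case True
      with \<open>q \<in> A \<and> _\<close> assms(1) show ?thesis by (simp add: glue_perms_def)
    next
      case False
      with True have gI: "g q \<in> I" "q \<in> A" by auto
      have "q \<in> fiber A g (g q)" using gI by (simp add: fiber_def)
      then have "P (g q) q \<in> fiber A g (g q)" using assms(3)[OF gI(1)] by (simp add: permutes_in_image)
      then have "P (g q) q \<notin> fiber A g i" using False by (auto simp: fiber_def)
      then have "P i (P (g q) q) = P (g q) q" using assms(2) by (simp add: permutes_not_in)
      then show ?thesis using gI False by (simp add: glue_perms_def)
    qed
  next
    case False
    then have "q \<notin> fiber A g i" by (auto simp: fiber_def)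
    then have "P i q = q" using assms(2) by (simp add: permutes_not_in)
    then show ?thesis using False by (auto simp: glue_perms_def)
  qed
qed

lemma glue_perms_permutes_sign:
  assumes "finite A" "finite I" "\<And>j. j \<in> I \<Longrightarrow> P j permutes fiber A g j"
  shows "glue_perms A g I P permutes A \<and> sign (glue_perms A g I P) = (\<Prod>j\<in>I. sign (P j))"
  using assms(2,3)
proof (induction I rule: finite_induct)
  case empty
  then show ?case by (simp only: glue_perms_empty permutes_id sign_id prod.empty simp_thms)
next
  case (insert i I)
  have Pi: "P i permutes A" using insert.prems by (rule permutes_subset) (auto simp: fiber_def)
  have e: "glue_perms A g (insert i I) P = P i \<circ> glue_perms A g I P"
    using insert by (intro glue_perms_insert) auto
  have ih: "glue_perms A g I P permutes A \<and> sign (glue_perms A g I P) = (\<Prod>j\<in>I. sign (P j))"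
    using insert by auto
  have comp: "P i \<circ> glue_perms A g I P permutes A" by (rule permutes_compose[OF ih[THEN conjunct1] Pi])
  have sign_comp: "sign (P i \<circ> glue_perms A g I P) = sign (P i) * sign (glue_perms A g I P)"
    by (rule sign_compose) (use permutes_imp_permutation[OF assms(1)] Pi ih in auto)
  show ?case unfolding e prod.insert[OF insert.hyps(1,2)] by (intro conjI comp) (simp only: sign_comp ih[THEN conjunct2])
qed

lemma glue_perms_fiber: "q \<in> fiber A g j \<Longrightarrow> j \<in> I \<Longrightarrow> glue_perms A g I P q = P j q"
  by (simp add: glue_perms_def fiber_def)

lemma fiber_glue_perms:
  assumes "\<And>j. j \<in> I \<Longrightarrow> P j permutes fiber A g j"
  shows "g (glue_perms A g I P q) = g q"
proof (cases "q \<in> A \<and> g q \<in> I")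
  case True
  then have "q \<in> fiber A g (g q)" by (simp add: fiber_def)
  then have "P (g q) q \<in> fiber A g (g q)" using assms True by (simp add: permutes_in_image)
  then show ?thesis using True by (simp add: glue_perms_def fiber_def)
next
  case False
  then have "glue_perms A g I P q = q" unfolding glue_perms_def by meson
  then show ?thesis by simp
qed

lemma finite_fiber: "finite A \<Longrightarrow> finite (fiber A g j)"
  by (simp add: fiber_def)

lemma inj_on_glue_perms: "inj_on (glue_perms A g I) (PiE I (\<lambda>j. {\<pi>. \<pi> permutes fiber A g j}))"
proof (rule inj_onI)
  fix P P' assume P: "P \<in> PiE I (\<lambda>j. {\<pi>. \<pi> permutes fiber A g j})"
    and P': "P' \<in> PiE I (\<lambda>j. {\<pi>. \<pi> permutes fiber A g j})" and eq: "glue_perms A g I P = glue_perms A g I P'"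
  show "P = P'"
  proof (rule PiE_ext[OF P P'])
    fix j assume j: "j \<in> I"
    show "P j = P' j"
    proof
      fix q
      show "P j q = P' j q"
      proof (cases "q \<in> fiber A g j")
        case True
        then show ?thesis using eq glue_perms_fiber[OF True j, of P] glue_perms_fiber[OF True j, of P'] by metis
      next
        case False
        have "P j permutes fiber A g j" "P' j permutes fiber A g j" using P P' j by auto
        then show ?thesis using False by (simp add: permutes_not_in)
      qed
    qed
  qed
qed

lemma glue_perms_in_fiber_perms:
  assumes "finite A" "finite I" "P \<in> PiE I (\<lambda>j. {\<pi>. \<pi> permutes fiber A g j})"
  shows "glue_perms A g I P \<in> fiber_perms A g"
proof -
  have Pj: "\<And>j. j \<in> I \<Longrightarrow> P j permutes fiber A g j" using assms(3) by auto
  show ?thesis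
    unfolding fiber_perms_def using glue_perms_permutes_sign[OF assms(1,2) Pj] fiber_glue_perms[OF Pj] by simp
qed

lemma restrict_id_permutes_fiber:
  assumes "finite A" "s \<in> fiber_perms A g"
  shows "restrict_id s (fiber A g j) permutes fiber A g j"
proof (rule permutes_restrict_id)
  have sp: "s permutes A" and sg: "\<And>q. g (s q) = g q" using assms(2) by (auto simp: fiber_perms_def)
  have sub: "s ` fiber A g j \<subseteq> fiber A g j"
    using sp sg by (auto simp: fiber_def permutes_in_image)
  have inj: "inj_on s (fiber A g j)" by (rule inj_on_subset[OF permutes_inj[OF sp] subset_UNIV])
  show "bij_betw s (fiber A g j) (fiber A g j)"
    using endo_inj_surj[OF finite_fiber[OF assms(1)] sub inj] inj by (simp add: bij_betw_def)
qed

lemma fiber_perms_subset_glue_perms_image: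
  assumes "finite A" "g ` A \<subseteq> I"
  shows "fiber_perms A g \<subseteq> glue_perms A g I ` (PiE I (\<lambda>j. {\<pi>. \<pi> permutes fiber A g j}))"
proof
  fix s assume s: "s \<in> fiber_perms A g"
  define P where "P = restrict (\<lambda>j. restrict_id s (fiber A g j)) I"
  have "P \<in> PiE I (\<lambda>j. {\<pi>. \<pi> permutes fiber A g j})"
    unfolding P_def restrict_PiE_iff using restrict_id_permutes_fiber[OF assms(1) s] by simp
  moreover have "glue_perms A g I P = s"
  proof
    fix q
    show "glue_perms A g I P q = s q"
    proof (cases "q \<in> A")
      case True
      then have "g q \<in> I" "q \<in> fiber A g (g q)" using assms(2) by (auto simp: fiber_def)
      then show ?thesis using True by (simp add: glue_perms_def P_def)
    next
      case False
      moreover have "s permutes A" using s by (simp add: fiber_perms_def)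
      ultimately show ?thesis by (simp add: glue_perms_def permutes_not_in)
    qed
  qed
  ultimately show "s \<in> glue_perms A g I ` (PiE I (\<lambda>j. {\<pi>. \<pi> permutes fiber A g j}))" by blast
qed

lemma bij_betw_glue_perms:
  assumes "finite A" "finite I" "g ` A \<subseteq> I"
  shows "bij_betw (glue_perms A g I) (PiE I (\<lambda>j. {\<pi>. \<pi> permutes fiber A g j})) (fiber_perms A g)"
  using inj_on_glue_perms glue_perms_in_fiber_perms[OF assms(1,2)]
    fiber_perms_subset_glue_perms_image[OF assms(1,3)]
  by (intro bij_betw_imageI) auto

lemma card_fiber_perms:
  assumes "finite A" "finite I" "g ` A \<subseteq> I"
  shows "card (fiber_perms A g) = (\<Prod>j\<in>I. fact (card (fiber A g j)))"
proof -
  have "card (fiber_perms A g) = card (PiE I (\<lambda>j. {\<pi>. \<pi> permutes fiber A g j}))"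
    using bij_betw_glue_perms[OF assms] by (simp add: bij_betw_same_card)
  also have "\<dots> = (\<Prod>j\<in>I. card {\<pi>. \<pi> permutes fiber A g j})" using assms(2) by (simp add: card_PiE)
  also have "\<dots> = (\<Prod>j\<in>I. fact (card (fiber A g j)))"
    by (rule prod.cong[OF refl], rule card_permutations[OF refl finite_fiber[OF assms(1)]])
  finally show ?thesis .
qed

lemma UN_fiber: "g ` A \<subseteq> I \<Longrightarrow> (\<Union>j\<in>I. fiber A g j) = A"
  by (auto simp: fiber_def)

lemma prod_over_fibers:
  assumes "finite A" "finite I" "g ` A \<subseteq> I"
  shows "(\<Prod>q\<in>A. h q) = (\<Prod>j\<in>I. \<Prod>q\<in>fiber A g j. h q)"
proof -
  have "(\<Prod>q\<in>A. h q) = (\<Prod>q\<in>(\<Union>j\<in>I. fiber A g j). h q)" by (simp only: UN_fiber[OF assms(3)])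
  also have "\<dots> = (\<Prod>j\<in>I. \<Prod>q\<in>fiber A g j. h q)"
    by (rule prod.UNION_disjoint[OF assms(2)]) (auto simp: assms(1) fiber_def)
  finally show ?thesis .
qed

lemma prod_double_sum_PiE:
  fixes G :: "'i \<Rightarrow> 'x \<Rightarrow> 'x \<Rightarrow> 'b::comm_ring_1"
  assumes "finite I" "\<And>j. j \<in> I \<Longrightarrow> finite (X j)"
  shows "(\<Prod>j\<in>I. \<Sum>x\<in>X j. \<Sum>y\<in>X j. G j x y) = (\<Sum>P\<in>PiE I X. \<Sum>P'\<in>PiE I X. \<Prod>j\<in>I. G j (P j) (P' j))"
proof -
  have "(\<Prod>j\<in>I. \<Sum>x\<in>X j. \<Sum>y\<in>X j. G j x y) = (\<Sum>P\<in>PiE I X. \<Prod>j\<in>I. \<Sum>y\<in>X j. G j (P j) y)"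
    by (rule prod_sum_PiE[OF assms])
  also have "\<dots> = (\<Sum>P\<in>PiE I X. \<Sum>P'\<in>PiE I X. \<Prod>j\<in>I. G j (P j) (P' j))"
    by (rule sum.cong[OF refl], rule prod_sum_PiE[OF assms])
  finally show ?thesis .
qed

lemma sum_fiber_perm_pairs:
  fixes \<Phi> :: "'a \<Rightarrow> 'a \<Rightarrow> 'b::comm_ring_1"
  assumes fA: "finite A" and fI: "finite I" and gI: "g ` A \<subseteq> I"
  shows "(\<Sum>p\<in>fiber_perms A g. \<Sum>p'\<in>fiber_perms A g. of_int (sign p * sign p') * (\<Prod>q\<in>A. \<Phi> (p q) (p' q)))
       = (\<Prod>j\<in>I. \<Sum>\<pi>\<in>{\<pi>. \<pi> permutes fiber A g j}. \<Sum>\<pi>'\<in>{\<pi>. \<pi> permutes fiber A g j}.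
            of_int (sign \<pi> * sign \<pi>') * (\<Prod>q\<in>fiber A g j. \<Phi> (\<pi> q) (\<pi>' q)))"
    (is "?L = (\<Prod>j\<in>I. \<Sum>\<pi>\<in>?X j. \<Sum>\<pi>'\<in>?X j. ?G j \<pi> \<pi>')")
proof -
  let ?PE = "PiE I ?X"
  let ?F = "\<lambda>p p'. of_int (sign p * sign p') * (\<Prod>q\<in>A. \<Phi> (p q) (p' q)) :: 'b"
  have bij: "bij_betw (glue_perms A g I) ?PE (fiber_perms A g)" by (rule bij_betw_glue_perms[OF fA fI gI])
  have "?L = (\<Sum>P\<in>?PE. \<Sum>p'\<in>fiber_perms A g. ?F (glue_perms A g I P) p')"
    by (rule sum.reindex_bij_betw[OF bij, symmetric])
  also have "\<dots> = (\<Sum>P\<in>?PE. \<Sum>P'\<in>?PE. ?F (glue_perms A g I P) (glue_perms A g I P'))"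
    by (rule sum.cong[OF refl], rule sum.reindex_bij_betw[OF bij, symmetric])
  also have "\<dots> = (\<Sum>P\<in>?PE. \<Sum>P'\<in>?PE. \<Prod>j\<in>I. ?G j (P j) (P' j))"
  proof (rule sum.cong[OF refl], rule sum.cong[OF refl])
    fix P P' assume P: "P \<in> ?PE" and P': "P' \<in> ?PE"
    have Pj: "\<And>j. j \<in> I \<Longrightarrow> P j permutes fiber A g j" using P by auto
    have P'j: "\<And>j. j \<in> I \<Longrightarrow> P' j permutes fiber A g j" using P' by auto
    have s1: "sign (glue_perms A g I P) = (\<Prod>j\<in>I. sign (P j))" using glue_perms_permutes_sign[OF fA fI Pj] by (rule conjunct2)
    have s2: "sign (glue_perms A g I P') = (\<Prod>j\<in>I. sign (P' j))" using glue_perms_permutes_sign[OF fA fI P'j] by (rule conjunct2)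
    have pr: "(\<Prod>q\<in>A. \<Phi> (glue_perms A g I P q) (glue_perms A g I P' q)) = (\<Prod>j\<in>I. \<Prod>q\<in>fiber A g j. \<Phi> (P j q) (P' j q))"
    proof -
      have "(\<Prod>q\<in>A. \<Phi> (glue_perms A g I P q) (glue_perms A g I P' q)) = (\<Prod>j\<in>I. \<Prod>q\<in>fiber A g j. \<Phi> (glue_perms A g I P q) (glue_perms A g I P' q))"
        by (rule prod_over_fibers[OF fA fI gI])
      also have "\<dots> = (\<Prod>j\<in>I. \<Prod>q\<in>fiber A g j. \<Phi> (P j q) (P' j q))"
        by (rule prod.cong[OF refl], rule prod.cong[OF refl]) (simp add: glue_perms_fiber)
      finally show ?thesis .
    qed
    show "?F (glue_perms A g I P) (glue_perms A g I P') = (\<Prod>j\<in>I. ?G j (P j) (P' j))"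
      unfolding s1 s2 pr by (simp add: prod.distrib of_int_prod)
  qed
  also have "\<dots> = (\<Prod>j\<in>I. \<Sum>\<pi>\<in>?X j. \<Sum>\<pi>'\<in>?X j. ?G j \<pi> \<pi>')"
    by (rule prod_double_sum_PiE[symmetric, OF fI]) (simp add: finite_permutations finite_fiber[OF fA])
  finally show ?thesis .
qed

lemma map_permutation_eq:
  "map_permutation R f \<sigma> = (\<lambda>x. if x \<in> f ` R then f (\<sigma> (inv_into R f x)) else x)"
  by (simp add: map_permutation_def restrict_id_def fun_eq_iff)

lemma sum_perm_pairs_reindex:
  fixes \<Phi> :: "'a \<Rightarrow> 'a \<Rightarrow> 'b::comm_ring_1" and \<iota> :: "'c \<Rightarrow> 'a"
  assumes inj: "inj_on \<iota> R" and fR: "finite R"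
  shows "(\<Sum>\<pi>\<in>{\<pi>. \<pi> permutes \<iota> ` R}. \<Sum>\<pi>'\<in>{\<pi>. \<pi> permutes \<iota> ` R}. of_int (sign \<pi> * sign \<pi>') * (\<Prod>q\<in>\<iota> ` R. \<Phi> (\<pi> q) (\<pi>' q)))
       = (\<Sum>\<sigma>\<in>{\<sigma>. \<sigma> permutes R}. \<Sum>\<sigma>'\<in>{\<sigma>. \<sigma> permutes R}. of_int (sign \<sigma> * sign \<sigma>') * (\<Prod>i\<in>R. \<Phi> (\<iota> (\<sigma> i)) (\<iota> (\<sigma>' i))))"
proof -
  let ?m = "map_permutation R \<iota>"
  have bb: "bij_betw \<iota> R (\<iota> ` R)" using inj by (simp add: bij_betw_def)
  have bij: "bij_betw ?m {\<sigma>. \<sigma> permutes R} {\<pi>. \<pi> permutes \<iota> ` R}"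
    unfolding map_permutation_eq by (rule bij_betw_permutations[OF bb])
  have key: "of_int (sign (?m \<sigma>) * sign (?m \<sigma>')) * (\<Prod>q\<in>\<iota> ` R. \<Phi> (?m \<sigma> q) (?m \<sigma>' q))
      = of_int (sign \<sigma> * sign \<sigma>') * (\<Prod>i\<in>R. \<Phi> (\<iota> (\<sigma> i)) (\<iota> (\<sigma>' i)))"
    if "\<sigma> permutes R" "\<sigma>' permutes R" for \<sigma> \<sigma>'
  proof -
    have "sign (?m \<sigma>) = sign \<sigma>" "sign (?m \<sigma>') = sign \<sigma>'"
      using sign_map_permutation[OF inj _ fR] that by auto
    moreover have "(\<Prod>q\<in>\<iota> ` R. \<Phi> (?m \<sigma> q) (?m \<sigma>' q)) = (\<Prod>i\<in>R. \<Phi> (?m \<sigma> (\<iota> i)) (?m \<sigma>' (\<iota> i)))"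
      using inj by (simp add: prod.reindex)
    moreover have "(\<Prod>i\<in>R. \<Phi> (?m \<sigma> (\<iota> i)) (?m \<sigma>' (\<iota> i))) = (\<Prod>i\<in>R. \<Phi> (\<iota> (\<sigma> i)) (\<iota> (\<sigma>' i)))"
      by (rule prod.cong[OF refl]) (simp add: map_permutation_apply[OF inj])
    ultimately show ?thesis by simp
  qed
  have "(\<Sum>\<pi>\<in>{\<pi>. \<pi> permutes \<iota> ` R}. \<Sum>\<pi>'\<in>{\<pi>. \<pi> permutes \<iota> ` R}. of_int (sign \<pi> * sign \<pi>') * (\<Prod>q\<in>\<iota> ` R. \<Phi> (\<pi> q) (\<pi>' q)))
      = (\<Sum>\<sigma>\<in>{\<sigma>. \<sigma> permutes R}. \<Sum>\<pi>'\<in>{\<pi>. \<pi> permutes \<iota> ` R}. of_int (sign (?m \<sigma>) * sign \<pi>') * (\<Prod>q\<in>\<iota> ` R. \<Phi> (?m \<sigma> q) (\<pi>' q)))"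
    by (rule sum.reindex_bij_betw[OF bij, symmetric])
  also have "\<dots> = (\<Sum>\<sigma>\<in>{\<sigma>. \<sigma> permutes R}. \<Sum>\<sigma>'\<in>{\<sigma>. \<sigma> permutes R}. of_int (sign (?m \<sigma>) * sign (?m \<sigma>')) * (\<Prod>q\<in>\<iota> ` R. \<Phi> (?m \<sigma> q) (?m \<sigma>' q)))"
    by (rule sum.cong[OF refl], rule sum.reindex_bij_betw[OF bij, symmetric])
  also have "\<dots> = (\<Sum>\<sigma>\<in>{\<sigma>. \<sigma> permutes R}. \<Sum>\<sigma>'\<in>{\<sigma>. \<sigma> permutes R}. of_int (sign \<sigma> * sign \<sigma>') * (\<Prod>i\<in>R. \<Phi> (\<iota> (\<sigma> i)) (\<iota> (\<sigma>' i))))"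
  proof (rule sum.cong[OF refl], rule sum.cong[OF refl])
    fix \<sigma> \<sigma>' assume a: "\<sigma> \<in> {\<sigma>. \<sigma> permutes R}" "\<sigma>' \<in> {\<sigma>. \<sigma> permutes R}"
    show "of_int (sign (?m \<sigma>) * sign (?m \<sigma>')) * (\<Prod>q\<in>\<iota> ` R. \<Phi> (?m \<sigma> q) (?m \<sigma>' q))
      = of_int (sign \<sigma> * sign \<sigma>') * (\<Prod>i\<in>R. \<Phi> (\<iota> (\<sigma> i)) (\<iota> (\<sigma>' i)))"
      by (rule key) (use a in auto)
  qed
  finally show ?thesis .
qed

lemma row_group_eq_fiber_perms: "row_group lam = fiber_perms {0..<sum_list lam} (row_of lam)"
  by (simp add: row_group_def fiber_perms_def)

lemma col_group_eq_fiber_perms: "col_group lam = fiber_perms {0..<sum_list lam} (col_of lam)"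
  by (simp add: col_group_def fiber_perms_def)

lemma fiber_row_of:
  assumes "i < length lam"
  shows "fiber {0..<sum_list lam} (row_of lam) i = {row_start lam i..<row_start lam (Suc i)}"
proof
  show "fiber {0..<sum_list lam} (row_of lam) i \<subseteq> {row_start lam i..<row_start lam (Suc i)}"
    using row_of_bounds by (fastforce simp: fiber_def)
  show "{row_start lam i..<row_start lam (Suc i)} \<subseteq> fiber {0..<sum_list lam} (row_of lam) i"
  proof
    fix q assume q: "q \<in> {row_start lam i..<row_start lam (Suc i)}"
    then have "row_of lam q = i" by (intro row_of_eqI) auto
    moreover have "q < sum_list lam" using q row_start_le_sum_list[of lam "Suc i"] by auto
    ultimately show "q \<in> fiber {0..<sum_list lam} (row_of lam) i" by (simp add: fiber_def)
  qed
qed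

lemma card_row_group: "card (row_group lam) = (\<Prod>i<length lam. fact (lam ! i))"
proof -
  have gI: "row_of lam ` {0..<sum_list lam} \<subseteq> {..<length lam}" using row_of_bounds by auto
  have "card (row_group lam) = (\<Prod>i<length lam. fact (card (fiber {0..<sum_list lam} (row_of lam) i)))"
    unfolding row_group_eq_fiber_perms by (rule card_fiber_perms[OF _ _ gI]) auto
  also have "\<dots> = (\<Prod>i<length lam. fact (lam ! i))"
    by (rule prod.cong[OF refl]) (simp add: fiber_row_of row_start_Suc)
  finally show ?thesis .
qed

lemma young_coef_eq_col_sum:
  "young_coef lam lab v = (\<Sum>p\<in>col_group lam. if (\<forall>q<sum_list lam. lab (row_of lam (p q)) = v q) then sign p else 0)"
proof -
  let ?X = "\<Sum>p\<in>col_group lam. if (\<forall>q<sum_list lam. lab (row_of lam (p q)) = v q) then sign p else 0"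
  have inner: "(\<Sum>p\<in>col_group lam. if (\<forall>q<sum_list lam. lab (row_of lam (s (p q))) = v q) then sign p else 0) = ?X"
    if "s \<in> row_group lam" for s
  proof -
    have "\<And>q. row_of lam (s q) = row_of lam q" using that by (simp add: row_group_def)
    then show ?thesis by simp
  qed
  have "young_coef lam lab v = (\<Sum>s\<in>row_group lam. ?X) div (\<Prod>i<length lam. fact (lam ! i))"
    unfolding young_coef_def by (simp only: inner cong: sum.cong)
  also have "(\<Sum>s\<in>row_group lam. ?X) = (\<Prod>i<length lam. fact (lam ! i)) * ?X"
    by (simp add: card_row_group of_nat_prod)
  finally show ?thesis by simp
qed

text \<open>\<open>perm_pair_det \<Psi> R = |R|! \<cdot> det (\<Psi> i j)\<^sub>i\<^sub>,\<^sub>j\<^sub>\<in>\<^sub>R\<close>; only its being a fixed integer matters.\<close>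

definition perm_pair_det :: "(nat \<Rightarrow> nat \<Rightarrow> int) \<Rightarrow> nat set \<Rightarrow> int" where
  "perm_pair_det \<Psi> R = (\<Sum>\<sigma>\<in>{\<sigma>. \<sigma> permutes R}. \<Sum>\<sigma>'\<in>{\<sigma>. \<sigma> permutes R}.
      of_int (sign \<sigma> * sign \<sigma>') * (\<Prod>i\<in>R. \<Psi> (\<sigma> i) (\<sigma>' i)))"

lemma perm_pair_det_empty: "perm_pair_det \<Psi> {} = 1"
proof -
  have "{\<sigma>. \<sigma> permutes ({}::nat set)} = {id}" by (auto simp: permutes_empty)
  then show ?thesis by (simp add: perm_pair_det_def)
qed

definition column_rows :: "nat list \<Rightarrow> nat \<Rightarrow> nat set" where
  "column_rows lam c = {i. i < length lam \<and> c < lam ! i}"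

lemma fiber_col_of:
  "fiber {0..<sum_list lam} (col_of lam) c = (\<lambda>i. row_start lam i + c) ` column_rows lam c"
proof
  show "fiber {0..<sum_list lam} (col_of lam) c \<subseteq> (\<lambda>i. row_start lam i + c) ` column_rows lam c"
  proof
    fix q assume "q \<in> fiber {0..<sum_list lam} (col_of lam) c"
    then have q: "q < sum_list lam" "col_of lam q = c" by (auto simp: fiber_def)
    let ?i = "row_of lam q"
    have "q = row_start lam ?i + c" using q row_of_bounds(2)[OF q(1)] by (simp add: col_of_def)
    moreover have "?i \<in> column_rows lam c" using row_of_bounds(1)[OF q(1)] col_of_less[OF q(1)] q(2)
      by (simp add: column_rows_def)
    ultimately show "q \<in> (\<lambda>i. row_start lam i + c) ` column_rows lam c" by blast
  qed
  show "(\<lambda>i. row_start lam i + c) ` column_rows lam c \<subseteq> fiber {0..<sum_list lam} (col_of lam) c"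
  proof
    fix q assume "q \<in> (\<lambda>i. row_start lam i + c) ` column_rows lam c"
    then obtain i where i: "i < length lam" "c < lam ! i" "q = row_start lam i + c" by (auto simp: column_rows_def)
    show "q \<in> fiber {0..<sum_list lam} (col_of lam) c"
      using row_col_of_cell[OF i(1,2)] i(3) by (simp add: fiber_def)
  qed
qed

lemma inj_on_column_cells: "inj_on (\<lambda>i. row_start lam i + c) (column_rows lam c)"
proof (rule inj_onI)
  fix i j assume a: "i \<in> column_rows lam c" "j \<in> column_rows lam c" and e: "row_start lam i + c = row_start lam j + c"
  from a have i: "i < length lam" "c < lam ! i" and j: "j < length lam" "c < lam ! j" by (simp_all add: column_rows_def)
  have "i = row_of lam (row_start lam i + c)" using row_col_of_cell(1)[OF i] by simp
  also have "\<dots> = row_of lam (row_start lam j + c)" using e by simp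
  also have "\<dots> = j" using row_col_of_cell(1)[OF j] by simp
  finally show "i = j" .
qed

lemma finite_column_rows: "finite (column_rows lam c)"
  by (simp add: column_rows_def)

lemma fiber_col_of_pair_sum:
  "(\<Sum>\<pi>\<in>{\<pi>. \<pi> permutes fiber {0..<sum_list lam} (col_of lam) c}. \<Sum>\<pi>'\<in>{\<pi>. \<pi> permutes fiber {0..<sum_list lam} (col_of lam) c}.
      of_int (sign \<pi> * sign \<pi>') * (\<Prod>q\<in>fiber {0..<sum_list lam} (col_of lam) c. \<Psi> (row_of lam (\<pi> q)) (row_of lam (\<pi>' q))))
   = perm_pair_det \<Psi> (column_rows lam c)"
proof -
  let ?\<iota> = "\<lambda>i. row_start lam i + c"
  have row: "row_of lam (?\<iota> (\<tau> i)) = \<tau> i" if "\<tau> permutes column_rows lam c" "i \<in> column_rows lam c" for \<tau> i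
  proof -
    have "\<tau> i \<in> column_rows lam c" using that by (simp add: permutes_in_image)
    then show ?thesis by (intro row_col_of_cell(1)) (simp_all add: column_rows_def)
  qed
  have "(\<Sum>\<pi>\<in>{\<pi>. \<pi> permutes fiber {0..<sum_list lam} (col_of lam) c}. \<Sum>\<pi>'\<in>{\<pi>. \<pi> permutes fiber {0..<sum_list lam} (col_of lam) c}.
      of_int (sign \<pi> * sign \<pi>') * (\<Prod>q\<in>fiber {0..<sum_list lam} (col_of lam) c. \<Psi> (row_of lam (\<pi> q)) (row_of lam (\<pi>' q))))
      = (\<Sum>\<sigma>\<in>{\<sigma>. \<sigma> permutes column_rows lam c}. \<Sum>\<sigma>'\<in>{\<sigma>. \<sigma> permutes column_rows lam c}.
          of_int (sign \<sigma> * sign \<sigma>') * (\<Prod>i\<in>column_rows lam c. \<Psi> (row_of lam (?\<iota> (\<sigma> i))) (row_of lam (?\<iota> (\<sigma>' i)))))"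
    unfolding fiber_col_of by (rule sum_perm_pairs_reindex[OF inj_on_column_cells finite_column_rows])
  also have "\<dots> = perm_pair_det \<Psi> (column_rows lam c)"
    unfolding perm_pair_det_def by (intro sum.cong refl) (simp add: row cong: prod.cong)
  finally show ?thesis .
qed

lemma col_group_pair_sum:
  "(\<Sum>p\<in>col_group lam. \<Sum>p'\<in>col_group lam. of_int (sign p * sign p') *
       (\<Prod>q\<in>{0..<sum_list lam}. \<Psi> (row_of lam (p q)) (row_of lam (p' q))))
   = (\<Prod>c<sum_list lam. perm_pair_det \<Psi> (column_rows lam c))"
proof -
  let ?A = "{0..<sum_list lam}"
  have gI: "col_of lam ` ?A \<subseteq> {..<sum_list lam}"
    by (auto intro: le_less_trans[OF col_of_le])
  have "(\<Sum>p\<in>col_group lam. \<Sum>p'\<in>col_group lam. of_int (sign p * sign p') *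
       (\<Prod>q\<in>?A. \<Psi> (row_of lam (p q)) (row_of lam (p' q))))
     = (\<Prod>c<sum_list lam. \<Sum>\<pi>\<in>{\<pi>. \<pi> permutes fiber ?A (col_of lam) c}. \<Sum>\<pi>'\<in>{\<pi>. \<pi> permutes fiber ?A (col_of lam) c}.
            of_int (sign \<pi> * sign \<pi>') * (\<Prod>q\<in>fiber ?A (col_of lam) c. \<Psi> (row_of lam (\<pi> q)) (row_of lam (\<pi>' q))))"
    unfolding col_group_eq_fiber_perms by (rule sum_fiber_perm_pairs[OF _ _ gI]) auto
  also have "\<dots> = (\<Prod>c<sum_list lam. perm_pair_det \<Psi> (column_rows lam c))"
    by (rule prod.cong[OF refl]) (rule fiber_col_of_pair_sum)
  finally show ?thesis .
qed

lemma row_start_take: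
  assumes "take m lam1 = take m lam2" "i \<le> m"
  shows "row_start lam1 i = row_start lam2 i"
proof -
  have "take i lam1 = take i lam2" using assms by (metis min.absorb1 take_take)
  then show ?thesis by (simp add: row_start_def)
qed

lemma row_col_of_agree:
  assumes tk: "take m lam1 = take m lam2" and s1: "row_start lam1 m = sum_list lam1"
    and s2: "sum_list lam1 = sum_list lam2" and q: "q < sum_list lam1"
  shows "row_of lam2 q = row_of lam1 q" "col_of lam2 q = col_of lam1 q"
proof -
  let ?i = "row_of lam1 q"
  have p: "row_start lam1 ?i \<le> q" "q < row_start lam1 (Suc ?i)" using row_of_bounds[OF q] by auto
  have "?i < m"
  proof (rule ccontr)
    assume "\<not> ?i < m"
    then have "row_start lam1 m \<le> row_start lam1 ?i" by (intro row_start_mono) auto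
    then show False using p q s1 by simp
  qed
  then have e1: "row_start lam2 ?i = row_start lam1 ?i" "row_start lam2 (Suc ?i) = row_start lam1 (Suc ?i)"
    using row_start_take[OF tk] by auto
  show r: "row_of lam2 q = row_of lam1 q" by (rule row_of_eqI) (use p e1 in auto)
  show "col_of lam2 q = col_of lam1 q" by (simp add: col_of_def r e1)
qed

lemma col_group_agree:
  assumes tk: "take m lam1 = take m lam2" and s1: "row_start lam1 m = sum_list lam1"
    and s2: "sum_list lam1 = sum_list lam2"
  shows "col_group lam2 = col_group lam1"
proof -
  have "(\<forall>q. col_of lam2 (s q) = col_of lam2 q) \<longleftrightarrow> (\<forall>q. col_of lam1 (s q) = col_of lam1 q)"
    if sp: "s permutes {0..<sum_list lam1}" for s
  proof -
    have "col_of lam2 (s q) = col_of lam2 q \<longleftrightarrow> col_of lam1 (s q) = col_of lam1 q" for q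
    proof (cases "q < sum_list lam1")
      case True
      then have "s q < sum_list lam1" using sp permutes_in_image[OF sp, of q] by auto
      then show ?thesis using row_col_of_agree[OF tk s1 s2] True by simp
    next
      case False
      then have "s q = q" using sp by (simp add: permutes_not_in)
      then show ?thesis by simp
    qed
    then show ?thesis by blast
  qed
  then show ?thesis unfolding col_group_def s2[symmetric] by (intro Collect_cong) blast
qed

lemma int_sum_list_map_nat: "(\<And>x. x \<in> set xs \<Longrightarrow> f x \<ge> 0) \<Longrightarrow> int (sum_list (map (\<lambda>x. nat (f x)) xs)) = sum_list (map f xs)"
  by (induction xs) auto

lemma sum_list_map_upt_Suc: "sum_list (map f [m..<Suc n]) = (\<Sum>i=m..n. f i)"
  by (simp del: upt_Suc add: interv_sum_list_conv_sum_set_nat atLeastLessThanSuc_atLeastAtMost)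

lemma length_lam_plus [simp]: "length (lam_plus a k t) = a t"
  by (simp del: upt_Suc add: lam_plus_def)

lemma length_lam_minus [simp]: "length (lam_minus n a k t) = n - a t"
  by (simp del: upt_Suc add: lam_minus_def)

lemma nth_lam_plus: "i < a t \<Longrightarrow> lam_plus a k t ! i = nat (k t (i + 1))"
  by (simp del: upt_Suc add: lam_plus_def)

lemma nth_lam_minus: "i < n - a t \<Longrightarrow> lam_minus n a k t ! i = nat (k t (a t + 1 + i))"
  by (simp del: upt_Suc add: lam_minus_def)

context
  fixes r n :: nat and a :: "nat \<Rightarrow> nat" and k :: "nat \<Rightarrow> nat \<Rightarrow> int"
  assumes sw: "symmetric_weight r n a k" and an: "\<forall>t<r. a t \<le> n"
begin

lemma weight_nonneg: "t < r \<Longrightarrow> 1 \<le> i \<Longrightarrow> i \<le> n \<Longrightarrow> k t i \<ge> 0"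
  using sw by (simp add: symmetric_weight_def sum_symmetric_def pos_dominant_def)

lemma weight_decreasing: "t < r \<Longrightarrow> 1 \<le> i \<Longrightarrow> i < n \<Longrightarrow> i \<noteq> a t \<Longrightarrow> k t (i+1) \<le> k t i"
  using sw by (simp add: symmetric_weight_def sum_symmetric_def pos_dominant_def)

lemma weight_sum_symmetric: "t < r \<Longrightarrow> (\<Sum>i=1..a t. k t i) = (\<Sum>i=a t + 1..n. k t i)"
  using sw by (simp add: symmetric_weight_def sum_symmetric_def)

lemma weight_symmetric: "t < r \<Longrightarrow> 1 \<le> i \<Longrightarrow> i \<le> min (a t) (n - a t) \<Longrightarrow> k t i = k t (a t + i)"
  using sw by (simp add: symmetric_weight_def)

lemma sum_list_lam_plus: "t < r \<Longrightarrow> sum_list (lam_plus a k t) = depth_tau a k t"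
proof -
  assume t: "t < r"
  have "int (sum_list (lam_plus a k t)) = sum_list (map (k t) [1..<a t + 1])"
    unfolding lam_plus_def
    by (rule int_sum_list_map_nat) (use weight_nonneg[OF t] an t in auto)
  also have "\<dots> = (\<Sum>i=1..a t. k t i)" using sum_list_map_upt_Suc[of "k t" 1 "a t"] by simp
  finally have "int (sum_list (lam_plus a k t)) = (\<Sum>i=1..a t. k t i)" .
  then show ?thesis by (simp add: depth_tau_def)
qed

lemma sum_list_lam_minus: "t < r \<Longrightarrow> sum_list (lam_minus n a k t) = depth_tau a k t"
proof -
  assume t: "t < r"
  have "int (sum_list (lam_minus n a k t)) = sum_list (map (k t) [a t + 1..<n + 1])"
    unfolding lam_minus_def
    by (rule int_sum_list_map_nat) (use weight_nonneg[OF t] an t in auto)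
  also have "\<dots> = (\<Sum>i=a t + 1..n. k t i)" using sum_list_map_upt_Suc[of "k t" "a t + 1" n] by simp
  also have "\<dots> = (\<Sum>i=1..a t. k t i)" using weight_sum_symmetric[OF t] by simp
  finally have "int (sum_list (lam_minus n a k t)) = (\<Sum>i=1..a t. k t i)" .
  then show ?thesis by (simp add: depth_tau_def)
qed

lemma take_lam_plus_lam_minus:
  assumes t: "t < r"
  shows "take (min (a t) (n - a t)) (lam_plus a k t) = take (min (a t) (n - a t)) (lam_minus n a k t)"
proof (rule nth_equalityI)
  show "length (take (min (a t) (n - a t)) (lam_plus a k t)) = length (take (min (a t) (n - a t)) (lam_minus n a k t))"
    by simp
  fix i assume "i < length (take (min (a t) (n - a t)) (lam_plus a k t))"
  then have i: "i < a t" "i < n - a t" by auto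
  have "k t (i + 1) = k t (a t + (i + 1))" by (rule weight_symmetric[OF t]) (use i in auto)
  then show "take (min (a t) (n - a t)) (lam_plus a k t) ! i = take (min (a t) (n - a t)) (lam_minus n a k t) ! i"
    using i by (simp add: nth_lam_plus nth_lam_minus)
qed

lemma lam_minus_agrees_lam_plus:
  assumes t: "t < r"
  shows "col_group (lam_minus n a k t) = col_group (lam_plus a k t)"
    "\<And>q. q < depth_tau a k t \<Longrightarrow> row_of (lam_minus n a k t) q = row_of (lam_plus a k t) q"
proof -
  let ?m = "min (a t) (n - a t)"
  have tk: "take ?m (lam_plus a k t) = take ?m (lam_minus n a k t)" by (rule take_lam_plus_lam_minus[OF t])
  have ss: "sum_list (lam_plus a k t) = sum_list (lam_minus n a k t)" using sum_list_lam_plus[OF t] sum_list_lam_minus[OF t] by simp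
  have "col_group (lam_minus n a k t) = col_group (lam_plus a k t) \<and>
        (\<forall>q < depth_tau a k t. row_of (lam_minus n a k t) q = row_of (lam_plus a k t) q)"
  proof (cases "a t \<le> n - a t")
    case True
    then have m: "?m = length (lam_plus a k t)" by simp
    have s1: "row_start (lam_plus a k t) ?m = sum_list (lam_plus a k t)" by (simp only: m row_start_ge_length order.refl)
    show ?thesis using col_group_agree[OF tk s1 ss] row_col_of_agree(1)[OF tk s1 ss] sum_list_lam_plus[OF t] by simp
  next
    case False
    then have m: "?m = length (lam_minus n a k t)" by simp
    have s1: "row_start (lam_minus n a k t) ?m = sum_list (lam_minus n a k t)" by (simp only: m row_start_ge_length order.refl)
    show ?thesis using col_group_agree[OF tk[symmetric] s1 ss[symmetric]] row_col_of_agree(1)[OF tk[symmetric] s1 ss[symmetric]] sum_list_lam_minus[OF t]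
      by simp
  qed
  then show "col_group (lam_minus n a k t) = col_group (lam_plus a k t)"
    "\<And>q. q < depth_tau a k t \<Longrightarrow> row_of (lam_minus n a k t) q = row_of (lam_plus a k t) q" by auto
qed

end

definition block_lengths :: "nat \<Rightarrow> (nat \<Rightarrow> nat) \<Rightarrow> (nat \<Rightarrow> nat \<Rightarrow> int) \<Rightarrow> nat list" where
  "block_lengths r a k = map (depth_tau a k) [0..<r]"

definition block_of :: "nat \<Rightarrow> (nat \<Rightarrow> nat) \<Rightarrow> (nat \<Rightarrow> nat \<Rightarrow> int) \<Rightarrow> nat \<Rightarrow> nat" where
  "block_of r a k s = row_of (block_lengths r a k) s"

lemma offset_0 [simp]: "offset a k 0 = 0"
  by (simp add: offset_def)

lemma offset_Suc: "offset a k (Suc t) = offset a k t + depth_tau a k t"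
  by (simp add: offset_def)

lemma depth_eq_offset: "depth r a k = offset a k r"
  by (simp add: depth_def offset_def)

lemma row_start_block_lengths: "t \<le> r \<Longrightarrow> row_start (block_lengths r a k) t = offset a k t"
proof -
  assume t: "t \<le> r"
  have "take t (block_lengths r a k) = map (depth_tau a k) [0..<t]" using t by (simp add: block_lengths_def take_map)
  then have "row_start (block_lengths r a k) t = sum_list (map (depth_tau a k) [0..<t])" by (simp add: row_start_def)
  also have "\<dots> = offset a k t" by (simp add: interv_sum_list_conv_sum_set_nat offset_def atLeast0LessThan)
  finally show ?thesis .
qed

lemma sum_list_block_lengths: "sum_list (block_lengths r a k) = depth r a k"
  using row_start_block_lengths[of r r a k] row_start_ge_length[of "block_lengths r a k" r] by (simp add: block_lengths_def depth_eq_offset)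

lemma block_of_bounds:
  assumes "s < depth r a k"
  shows "block_of r a k s < r" "offset a k (block_of r a k s) \<le> s" "s < offset a k (block_of r a k s) + depth_tau a k (block_of r a k s)"
proof -
  have s: "s < sum_list (block_lengths r a k)" using assms by (simp add: sum_list_block_lengths)
  note p = row_of_bounds[OF s]
  show t: "block_of r a k s < r" using p(1) by (simp add: block_of_def block_lengths_def)
  show "offset a k (block_of r a k s) \<le> s" using p(2) row_start_block_lengths[of "block_of r a k s" r a k] t by (simp add: block_of_def)
  show "s < offset a k (block_of r a k s) + depth_tau a k (block_of r a k s)"
    using p(3) row_start_block_lengths[of "Suc (block_of r a k s)" r a k] t by (simp add: block_of_def offset_Suc)
qed

lemma block_of_offset:
  assumes "t < r" "q < depth_tau a k t"
  shows "block_of r a k (offset a k t + q) = t"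
  unfolding block_of_def
  by (rule row_of_eqI) (use assms row_start_block_lengths[of t r a k] row_start_block_lengths[of "Suc t" r a k] in \<open>auto simp: offset_Suc\<close>)

lemma offset_mono: "t \<le> t' \<Longrightarrow> offset a k t \<le> offset a k t'"
  unfolding offset_def by (rule sum_mono2) auto

lemma offset_depth_tau_le_depth:
  assumes "t < r"
  shows "offset a k t + depth_tau a k t \<le> depth r a k"
  using offset_mono[of "Suc t" r a k] assms by (simp add: offset_Suc depth_eq_offset)

lemma prod_lessThan_add: "(\<Prod>s<m1 + (m2::nat). F s) = (\<Prod>s<m1. F s) * (\<Prod>q<m2. F (m1 + q))"
  by (induction m2) (auto simp: algebra_simps)

lemma prod_lessThan_offset: "(\<Prod>s<offset a k R. F s) = (\<Prod>t<R. \<Prod>q<depth_tau a k t. F (offset a k t + q))"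
  by (induction R) (auto simp: offset_Suc prod_lessThan_add)

lemma finite_col_group: "finite (col_group lam)"
  unfolding col_group_def by (rule finite_subset[OF _ finite_permutations[of "{0..<sum_list lam}"]]) auto

lemma finite_Evee: "finite (Evee r n a)"
  by (rule finite_subset[of _ "{..<r} \<times> {..n} \<times> {..n}"]) (auto simp: Evee_def)

lemma prod_if_zero:
  fixes w :: "'i \<Rightarrow> 'b::comm_semiring_1"
  assumes "finite A"
  shows "(\<Prod>t\<in>A. if B t then w t else 0) = (if \<forall>t\<in>A. B t then \<Prod>t\<in>A. w t else 0)"
  using assms by (induction A rule: finite_induct) auto

section \<open>Expansion of the coefficients \<open>a\<^sub>\<kappa>\<^sub>,\<^sub>l\<close>\<close>

text \<open>Expanding the Young symmetrizers (the row groups act trivially on row-constant labels), a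
  choice \<open>P \<tau> = (p\<^sup>+, p\<^sup>-)\<close> of column permutations for every block contributes its sign to the
  coefficient of exactly one sequence \<open>labelling_of P\<close>: slot \<open>q\<close> of block \<open>\<tau>\<close> carries
  \<open>l\<^sup>\<tau>\<^sub>i\<^sub>,\<^sub>j\<close>, where \<open>i\<close> is the row of \<open>p\<^sup>+ q\<close> and \<open>j - a\<^sub>\<tau>\<close> the row of \<open>p\<^sup>- q\<close>.\<close>

definition column_perm_choices :: "nat \<Rightarrow> nat \<Rightarrow> (nat \<Rightarrow> nat) \<Rightarrow> (nat \<Rightarrow> nat \<Rightarrow> int) \<Rightarrow> (nat \<Rightarrow> (nat \<Rightarrow> nat) \<times> (nat \<Rightarrow> nat)) set" where
  "column_perm_choices r n a k = PiE {..<r} (\<lambda>t. col_group (lam_plus a k t) \<times> col_group (lam_minus n a k t))"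

definition labelling_of :: "nat \<Rightarrow> nat \<Rightarrow> (nat \<Rightarrow> nat) \<Rightarrow> (nat \<Rightarrow> nat \<Rightarrow> int) \<Rightarrow> (nat \<Rightarrow> (nat \<Rightarrow> nat) \<times> (nat \<Rightarrow> nat)) \<Rightarrow> nat \<Rightarrow> var" where
  "labelling_of r n a k P = (\<lambda>s. if s < depth r a k then
      (block_of r a k s,
       row_of (lam_plus a k (block_of r a k s)) (fst (P (block_of r a k s)) (s - offset a k (block_of r a k s))) + 1,
       a (block_of r a k s) + 1 + row_of (lam_minus n a k (block_of r a k s)) (snd (P (block_of r a k s)) (s - offset a k (block_of r a k s))))
     else undefined)"

definition choice_sign :: "nat \<Rightarrow> (nat \<Rightarrow> (nat \<Rightarrow> nat) \<times> (nat \<Rightarrow> nat)) \<Rightarrow> int" where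
  "choice_sign r P = (\<Prod>t<r. sign (fst (P t)) * sign (snd (P t)))"

text \<open>\<open>theta_symbol r n a k x\<close> is \<open>\<theta>\<^sup>\<kappa>\<close> with every \<open>\<theta>\<^sub>l\<close> replaced by the integer \<open>x l\<close>.\<close>

definition theta_symbol :: "nat \<Rightarrow> nat \<Rightarrow> (nat \<Rightarrow> nat) \<Rightarrow> (nat \<Rightarrow> nat \<Rightarrow> int) \<Rightarrow> (var \<Rightarrow> nat) \<Rightarrow> int" where
  "theta_symbol r n a k x = (\<Sum>l\<in>({0..<depth r a k} \<rightarrow>\<^sub>E Evee r n a). a_coef r n a k l * (\<Prod>s<depth r a k. int (x (l s))))"

definition block_matrix :: "(nat \<Rightarrow> nat) \<Rightarrow> (var \<Rightarrow> nat) \<Rightarrow> nat \<Rightarrow> nat \<Rightarrow> nat \<Rightarrow> int" where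
  "block_matrix a x t = (\<lambda>i j. int (x (t, i + 1, a t + 1 + j)))"

lemma labelling_of_offset:
  assumes "t < r" "q < depth_tau a k t"
  shows "labelling_of r n a k P (offset a k t + q) = (t, row_of (lam_plus a k t) (fst (P t) q) + 1, a t + 1 + row_of (lam_minus n a k t) (snd (P t) q))"
proof -
  have "offset a k t + q < depth r a k" using offset_depth_tau_le_depth[of t r a k, OF assms(1)] assms(2) by simp
  then show ?thesis using block_of_offset[OF assms] by (simp add: labelling_of_def)
qed

context
  fixes r n :: nat and a :: "nat \<Rightarrow> nat" and k :: "nat \<Rightarrow> nat \<Rightarrow> int"
  assumes sw: "symmetric_weight r n a k" and an: "\<forall>t<r. a t \<le> n"
begin

lemma col_group_lam_plus_less:
  assumes "t < r" "p \<in> col_group (lam_plus a k t)" "q < depth_tau a k t"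
  shows "p q < depth_tau a k t"
proof -
  have pp: "p permutes {0..<depth_tau a k t}" using assms(2) sum_list_lam_plus[OF sw an assms(1)] by (simp add: col_group_def)
  then show ?thesis using permutes_in_image[OF pp, of q] assms(3) by simp
qed

lemma col_group_lam_minus_less:
  assumes "t < r" "p \<in> col_group (lam_minus n a k t)" "q < depth_tau a k t"
  shows "p q < depth_tau a k t"
proof -
  have pp: "p permutes {0..<depth_tau a k t}" using assms(2) sum_list_lam_minus[OF sw an assms(1)] by (simp add: col_group_def)
  then show ?thesis using permutes_in_image[OF pp, of q] assms(3) by simp
qed

lemma labelling_of_in_PiE:
  assumes P: "P \<in> column_perm_choices r n a k"
  shows "labelling_of r n a k P \<in> ({0..<depth r a k} \<rightarrow>\<^sub>E Evee r n a)"
proof -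
  have "labelling_of r n a k P s \<in> Evee r n a" if s: "s < depth r a k" for s
  proof -
    let ?t = "block_of r a k s"
    let ?q = "s - offset a k ?t"
    note b = block_of_bounds[OF s]
    have q: "?q < depth_tau a k ?t" using b by simp
    have "P ?t \<in> col_group (lam_plus a k ?t) \<times> col_group (lam_minus n a k ?t)"
      using P b(1) unfolding column_perm_choices_def by (intro PiE_mem[of P "{..<r}"]) auto
    then have Pt: "fst (P ?t) \<in> col_group (lam_plus a k ?t)" "snd (P ?t) \<in> col_group (lam_minus n a k ?t)"
      by (simp_all add: mem_Times_iff)
    have plus: "fst (P ?t) ?q < sum_list (lam_plus a k ?t)" using col_group_lam_plus_less[OF b(1) Pt(1) q] sum_list_lam_plus[OF sw an b(1)] by simp
    have minus: "snd (P ?t) ?q < sum_list (lam_minus n a k ?t)" using col_group_lam_minus_less[OF b(1) Pt(2) q] sum_list_lam_minus[OF sw an b(1)] by simp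
    have "row_of (lam_plus a k ?t) (fst (P ?t) ?q) < a ?t" using row_of_bounds(1)[OF plus] by simp
    moreover have "row_of (lam_minus n a k ?t) (snd (P ?t) ?q) < n - a ?t" using row_of_bounds(1)[OF minus] by simp
    moreover have "a ?t \<le> n" using an b(1) by simp
    ultimately show ?thesis using s b(1) unfolding labelling_of_def Evee_def by simp
  qed
  moreover have "labelling_of r n a k P s = undefined" if "s \<notin> {0..<depth r a k}" for s
    using that by (simp add: labelling_of_def)
  ultimately show ?thesis by (intro PiE_I) auto
qed

lemma labelling_of_iff:
  assumes l: "l \<in> ({0..<depth r a k} \<rightarrow>\<^sub>E Evee r n a)" and P: "P \<in> column_perm_choices r n a k"
  shows "((\<forall>t<r. \<forall>q<depth_tau a k t. fst (l (offset a k t + q)) = t) \<and>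
          (\<forall>t<r. (\<forall>q<depth_tau a k t. row_of (lam_plus a k t) (fst (P t) q) + 1 = fst (snd (l (offset a k t + q)))) \<and>
                 (\<forall>q<depth_tau a k t. a t + 1 + row_of (lam_minus n a k t) (snd (P t) q) = snd (snd (l (offset a k t + q))))))
         \<longleftrightarrow> l = labelling_of r n a k P" (is "?A \<longleftrightarrow> _")
proof
  assume "l = labelling_of r n a k P"
  then show ?A by (simp add: labelling_of_offset)
next
  assume A: ?A
  have LPin: "labelling_of r n a k P \<in> ({0..<depth r a k} \<rightarrow>\<^sub>E Evee r n a)" by (rule labelling_of_in_PiE[OF P])
  show "l = labelling_of r n a k P"
  proof (rule PiE_ext[OF l LPin])
    fix s assume "s \<in> {0..<depth r a k}"
    then have s: "s < depth r a k" by simp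
    let ?t = "block_of r a k s"
    let ?q = "s - offset a k ?t"
    note b = block_of_bounds[OF s]
    have q: "?q < depth_tau a k ?t" and sq: "s = offset a k ?t + ?q" using b by auto
    from A have A1: "\<forall>t<r. \<forall>q<depth_tau a k t. fst (l (offset a k t + q)) = t"
      and A2: "\<forall>t<r. \<forall>q<depth_tau a k t. row_of (lam_plus a k t) (fst (P t) q) + 1 = fst (snd (l (offset a k t + q)))"
      and A3: "\<forall>t<r. \<forall>q<depth_tau a k t. a t + 1 + row_of (lam_minus n a k t) (snd (P t) q) = snd (snd (l (offset a k t + q)))"
      by blast+
    have "fst (l s) = ?t" using A1[rule_format, OF b(1) q] sq by simp
    moreover have "fst (snd (l s)) = row_of (lam_plus a k ?t) (fst (P ?t) ?q) + 1" using A2[rule_format, OF b(1) q] sq by simp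
    moreover have "snd (snd (l s)) = a ?t + 1 + row_of (lam_minus n a k ?t) (snd (P ?t) ?q)" using A3[rule_format, OF b(1) q] sq by simp
    ultimately have "l s = (?t, row_of (lam_plus a k ?t) (fst (P ?t) ?q) + 1, a ?t + 1 + row_of (lam_minus n a k ?t) (snd (P ?t) ?q))"
      by (metis prod.collapse)
    then show "l s = labelling_of r n a k P s" using labelling_of_offset[OF b(1) q] sq by metis
  qed
qed

lemma young_coef_pair_eq_sum:
  assumes t: "t < r"
  shows "young_coef (lam_plus a k t) (\<lambda>i. i + 1) (\<lambda>q. fst (snd (l (offset a k t + q)))) *
         young_coef (lam_minus n a k t) (\<lambda>i. a t + 1 + i) (\<lambda>q. snd (snd (l (offset a k t + q))))
    = (\<Sum>pp\<in>col_group (lam_plus a k t) \<times> col_group (lam_minus n a k t).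
         if (\<forall>q<depth_tau a k t. row_of (lam_plus a k t) (fst pp q) + 1 = fst (snd (l (offset a k t + q)))) \<and>
            (\<forall>q<depth_tau a k t. a t + 1 + row_of (lam_minus n a k t) (snd pp q) = snd (snd (l (offset a k t + q))))
         then sign (fst pp) * sign (snd pp) else 0)"
  unfolding young_coef_eq_col_sum sum_list_lam_plus[OF sw an t] sum_list_lam_minus[OF sw an t]
    sum_product sum.cartesian_product
  by (rule sum.cong) auto

lemma a_coef_eq_sum_choices:
  assumes l: "l \<in> ({0..<depth r a k} \<rightarrow>\<^sub>E Evee r n a)"
  shows "a_coef r n a k l = (\<Sum>P\<in>column_perm_choices r n a k. if l = labelling_of r n a k P then choice_sign r P else 0)"
proof -
  let ?Mp = "\<lambda>t p. \<forall>q<depth_tau a k t. row_of (lam_plus a k t) (p q) + 1 = fst (snd (l (offset a k t + q)))"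
  let ?Mm = "\<lambda>t p'. \<forall>q<depth_tau a k t. a t + 1 + row_of (lam_minus n a k t) (p' q) = snd (snd (l (offset a k t + q)))"
  let ?cond = "\<forall>t<r. \<forall>q<depth_tau a k t. fst (l (offset a k t + q)) = t"
  let ?H = "\<lambda>t pp. if ?Mp t (fst pp) \<and> ?Mm t (snd pp) then sign (fst pp) * sign (snd pp) else 0"
  have prod_eq_sum: "(\<Prod>t<r. \<Sum>pp\<in>col_group (lam_plus a k t) \<times> col_group (lam_minus n a k t). ?H t pp)
      = (\<Sum>P\<in>column_perm_choices r n a k. \<Prod>t<r. ?H t (P t))"
    unfolding column_perm_choices_def by (rule prod_sum_PiE) (auto intro: finite_col_group)
  have prod_matches: "(\<Prod>t<r. ?H t (P t)) = (if \<forall>t<r. ?Mp t (fst (P t)) \<and> ?Mm t (snd (P t)) then choice_sign r P else 0)" for P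
    unfolding choice_sign_def by (subst prod_if_zero) auto
  have "a_coef r n a k l = (if ?cond then (\<Prod>t<r. \<Sum>pp\<in>col_group (lam_plus a k t) \<times> col_group (lam_minus n a k t). ?H t pp) else 0)"
  proof -
    have young_prod: "(\<Prod>t<r. young_coef (lam_plus a k t) (\<lambda>i. i + 1) (\<lambda>q. fst (snd (l (offset a k t + q)))) *
            young_coef (lam_minus n a k t) (\<lambda>i. a t + 1 + i) (\<lambda>q. snd (snd (l (offset a k t + q)))))
        = (\<Prod>t<r. \<Sum>pp\<in>col_group (lam_plus a k t) \<times> col_group (lam_minus n a k t). ?H t pp)"
      by (rule prod.cong[OF refl], rule young_coef_pair_eq_sum) simp
    show ?thesis unfolding a_coef_def young_prod ..
  qed
  also have "\<dots> = (\<Sum>P\<in>column_perm_choices r n a k.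
      if ?cond \<and> (\<forall>t<r. ?Mp t (fst (P t)) \<and> ?Mm t (snd (P t))) then choice_sign r P else 0)"
  proof (cases ?cond)
    case True
    then show ?thesis unfolding prod_eq_sum prod_matches by simp
  next
    case False
    then have F: "?cond = False" by blast
    show ?thesis unfolding F by simp
  qed
  also have "\<dots> = (\<Sum>P\<in>column_perm_choices r n a k. if l = labelling_of r n a k P then choice_sign r P else 0)"
    using labelling_of_iff[OF l] by (intro sum.cong refl) simp
  finally show ?thesis .
qed

lemma theta_symbol_eq_sum_choices: "theta_symbol r n a k x = (\<Sum>P\<in>column_perm_choices r n a k. choice_sign r P * (\<Prod>s<depth r a k. int (x (labelling_of r n a k P s))))"
proof -
  let ?L = "{0..<depth r a k} \<rightarrow>\<^sub>E Evee r n a"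
  have finL: "finite ?L" by (rule finite_PiE) (auto intro: finite_Evee)
  have "theta_symbol r n a k x = (\<Sum>l\<in>?L. \<Sum>P\<in>column_perm_choices r n a k. if l = labelling_of r n a k P then choice_sign r P * (\<Prod>s<depth r a k. int (x (l s))) else 0)"
    unfolding theta_symbol_def
  proof (rule sum.cong[OF refl])
    fix l assume l: "l \<in> ?L"
    show "a_coef r n a k l * (\<Prod>s<depth r a k. int (x (l s))) =
        (\<Sum>P\<in>column_perm_choices r n a k. if l = labelling_of r n a k P then choice_sign r P * (\<Prod>s<depth r a k. int (x (l s))) else 0)"
      unfolding a_coef_eq_sum_choices[OF l] sum_distrib_right by (rule sum.cong) simp_all
  qed
  also have "\<dots> = (\<Sum>P\<in>column_perm_choices r n a k. \<Sum>l\<in>?L. if l = labelling_of r n a k P then choice_sign r P * (\<Prod>s<depth r a k. int (x (l s))) else 0)"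
    by (rule sum.swap)
  also have "\<dots> = (\<Sum>P\<in>column_perm_choices r n a k. choice_sign r P * (\<Prod>s<depth r a k. int (x (labelling_of r n a k P s))))"
    using finL labelling_of_in_PiE by (intro sum.cong refl) (simp add: sum.delta)
  finally show ?thesis .
qed

lemma theta_symbol_eq_prod_blocks: "theta_symbol r n a k x = (\<Prod>t<r. \<Sum>pp\<in>col_group (lam_plus a k t) \<times> col_group (lam_minus n a k t).
      sign (fst pp) * sign (snd pp) * (\<Prod>q<depth_tau a k t.
         block_matrix a x t (row_of (lam_plus a k t) (fst pp q)) (row_of (lam_minus n a k t) (snd pp q))))"
proof -
  let ?G = "\<lambda>t pp. sign (fst pp) * sign (snd pp) * (\<Prod>q<depth_tau a k t.
         block_matrix a x t (row_of (lam_plus a k t) (fst pp q)) (row_of (lam_minus n a k t) (snd pp q)))"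
  have e: "choice_sign r P * (\<Prod>s<depth r a k. int (x (labelling_of r n a k P s))) = (\<Prod>t<r. ?G t (P t))" for P
  proof -
    have "(\<Prod>s<depth r a k. int (x (labelling_of r n a k P s))) = (\<Prod>t<r. \<Prod>q<depth_tau a k t. int (x (labelling_of r n a k P (offset a k t + q))))"
      unfolding depth_eq_offset by (rule prod_lessThan_offset)
    also have "\<dots> = (\<Prod>t<r. \<Prod>q<depth_tau a k t. block_matrix a x t (row_of (lam_plus a k t) (fst (P t) q)) (row_of (lam_minus n a k t) (snd (P t) q)))"
      by (intro prod.cong refl) (simp add: labelling_of_offset block_matrix_def)
    finally show ?thesis unfolding choice_sign_def by (simp add: prod.distrib)
  qed
  have "theta_symbol r n a k x = (\<Sum>P\<in>column_perm_choices r n a k. \<Prod>t<r. ?G t (P t))" unfolding theta_symbol_eq_sum_choices e ..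
  also have "\<dots> = (\<Prod>t<r. \<Sum>pp\<in>col_group (lam_plus a k t) \<times> col_group (lam_minus n a k t). ?G t pp)"
    unfolding column_perm_choices_def by (rule prod_sum_PiE[symmetric]) (auto intro: finite_col_group)
  finally show ?thesis .
qed

lemma block_sum_eq_prod_columns:
  assumes t: "t < r"
  shows "(\<Sum>pp\<in>col_group (lam_plus a k t) \<times> col_group (lam_minus n a k t).
      sign (fst pp) * sign (snd pp) * (\<Prod>q<depth_tau a k t.
         block_matrix a x t (row_of (lam_plus a k t) (fst pp q)) (row_of (lam_minus n a k t) (snd pp q))))
    = (\<Prod>c<depth_tau a k t. perm_pair_det (block_matrix a x t) (column_rows (lam_plus a k t) c))"
proof -
  let ?lp = "lam_plus a k t"
  let ?C = "col_group ?lp"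
  have CC: "col_group (lam_minus n a k t) = ?C" by (rule lam_minus_agrees_lam_plus(1)[OF sw an t])
  have "(\<Sum>pp\<in>col_group (lam_plus a k t) \<times> col_group (lam_minus n a k t).
      sign (fst pp) * sign (snd pp) * (\<Prod>q<depth_tau a k t.
         block_matrix a x t (row_of ?lp (fst pp q)) (row_of (lam_minus n a k t) (snd pp q))))
    = (\<Sum>p\<in>?C. \<Sum>p'\<in>?C. sign p * sign p' * (\<Prod>q<depth_tau a k t.
         block_matrix a x t (row_of ?lp (p q)) (row_of (lam_minus n a k t) (p' q))))"
    unfolding CC sum.cartesian_product by (rule sum.cong) (auto simp: case_prod_beta)
  also have "\<dots> = (\<Sum>p\<in>?C. \<Sum>p'\<in>?C. of_int (sign p * sign p') * (\<Prod>q\<in>{0..<sum_list ?lp}.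
         block_matrix a x t (row_of ?lp (p q)) (row_of ?lp (p' q))))"
  proof (intro sum.cong refl)
    fix p p' assume p: "p \<in> ?C" and p': "p' \<in> ?C"
    have "(\<Prod>q<depth_tau a k t. block_matrix a x t (row_of ?lp (p q)) (row_of (lam_minus n a k t) (p' q)))
        = (\<Prod>q<depth_tau a k t. block_matrix a x t (row_of ?lp (p q)) (row_of ?lp (p' q)))"
    proof (rule prod.cong[OF refl])
      fix q assume "q \<in> {..<depth_tau a k t}"
      then have "p' q < depth_tau a k t" using col_group_lam_plus_less[OF t p'] by simp
      then show "block_matrix a x t (row_of ?lp (p q)) (row_of (lam_minus n a k t) (p' q))
          = block_matrix a x t (row_of ?lp (p q)) (row_of ?lp (p' q))"
        using lam_minus_agrees_lam_plus(2)[OF sw an t] by simp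
    qed
    then show "sign p * sign p' * (\<Prod>q<depth_tau a k t. block_matrix a x t (row_of ?lp (p q)) (row_of (lam_minus n a k t) (p' q)))
        = of_int (sign p * sign p') * (\<Prod>q\<in>{0..<sum_list ?lp}. block_matrix a x t (row_of ?lp (p q)) (row_of ?lp (p' q)))"
      using sum_list_lam_plus[OF sw an t] by (simp add: atLeast0LessThan)
  qed
  also have "\<dots> = (\<Prod>c<sum_list ?lp. perm_pair_det (block_matrix a x t) (column_rows ?lp c))" by (rule col_group_pair_sum)
  finally show ?thesis using sum_list_lam_plus[OF sw an t] by simp
qed

lemma theta_symbol_eq_prod_columns: "theta_symbol r n a k x = (\<Prod>t<r. \<Prod>c<depth_tau a k t. perm_pair_det (block_matrix a x t) (column_rows (lam_plus a k t) c))"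
  unfolding theta_symbol_eq_prod_blocks by (rule prod.cong[OF refl]) (simp add: block_sum_eq_prod_columns)

end

lemma downward_closed_eq_lessThan:
  assumes "finite S" "\<And>i j. i \<in> S \<Longrightarrow> j < i \<Longrightarrow> j \<in> S"
  shows "S = {..<card S}"
proof (cases "S = {}")
  case True
  then show ?thesis by simp
next
  case False
  define M where "M = Max S"
  have MS: "M \<in> S" using Max_in[OF assms(1) False] by (simp add: M_def)
  have e: "S = {..<Suc M}"
  proof
    show "S \<subseteq> {..<Suc M}" using Max_ge[OF assms(1)] by (auto simp: less_Suc_eq_le M_def)
    show "{..<Suc M} \<subseteq> S"
    proof
      fix y assume "y \<in> {..<Suc M}"
      then have "y = M \<or> y < M" by auto
      then show "y \<in> S" using MS assms(2) by auto
    qed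
  qed
  then have "card S = Suc M" by simp
  with e show ?thesis by simp
qed

context
  fixes r n :: nat and a :: "nat \<Rightarrow> nat" and k :: "nat \<Rightarrow> nat \<Rightarrow> int"
  assumes sw: "symmetric_weight r n a k" and an: "\<forall>t<r. a t \<le> n"
begin

lemma lam_plus_decreasing:
  assumes t: "t < r" and ij: "i' \<le> i" "i < a t"
  shows "lam_plus a k t ! i \<le> lam_plus a k t ! i'"
  using ij
proof (induction i)
  case 0
  then show ?case by simp
next
  case (Suc i)
  show ?case
  proof (cases "i' = Suc i")
    case False
    then have ih: "lam_plus a k t ! i \<le> lam_plus a k t ! i'" using Suc by simp
    have atn: "a t \<le> n" using an t by simp
    have "k t (Suc i + 1) \<le> k t (Suc i)"
      using weight_decreasing[OF sw an t, of "Suc i"] Suc.prems atn by simp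
    moreover have "k t (Suc i + 1) \<ge> 0" using weight_nonneg[OF sw an t, of "Suc i + 1"] Suc.prems atn by simp
    ultimately have "lam_plus a k t ! Suc i \<le> lam_plus a k t ! i" using Suc.prems by (simp add: nth_lam_plus)
    then show ?thesis using ih by simp
  qed simp
qed

lemma column_rows_eq_lessThan:
  assumes t: "t < r"
  shows "column_rows (lam_plus a k t) c = {..<card (column_rows (lam_plus a k t) c)}"
proof (rule downward_closed_eq_lessThan[OF finite_column_rows])
  fix i j assume "i \<in> column_rows (lam_plus a k t) c" "j < i"
  then have "i < a t" "c < lam_plus a k t ! i" "j < i" by (auto simp: column_rows_def)
  moreover have "lam_plus a k t ! i \<le> lam_plus a k t ! j" using lam_plus_decreasing[OF t, of j i] calculation by simp
  ultimately show "j \<in> column_rows (lam_plus a k t) c" by (simp add: column_rows_def)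
qed

lemma card_column_rows_le: "card (column_rows (lam_plus a k t) c) \<le> a t"
proof -
  have "column_rows (lam_plus a k t) c \<subseteq> {..<a t}" by (auto simp: column_rows_def)
  then show ?thesis using card_mono[of "{..<a t}"] by fastforce
qed

definition column_count :: "nat \<Rightarrow> nat \<Rightarrow> nat" where
  "column_count t h = card {c \<in> {..<depth_tau a k t}. card (column_rows (lam_plus a k t) c) = h}"

lemma prod_columns_eq_prod_powers:
  assumes t: "t < r"
  shows "(\<Prod>c<depth_tau a k t. perm_pair_det \<Psi> (column_rows (lam_plus a k t) c)) = (\<Prod>h\<in>{..a t}. perm_pair_det \<Psi> {..<h} ^ column_count t h)"
proof -
  let ?H = "\<lambda>c. card (column_rows (lam_plus a k t) c)"
  let ?D = "{..<depth_tau a k t}"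
  have "(\<Prod>c\<in>?D. perm_pair_det \<Psi> (column_rows (lam_plus a k t) c)) = (\<Prod>c\<in>?D. perm_pair_det \<Psi> {..<?H c})"
    by (rule prod.cong[OF refl]) (subst column_rows_eq_lessThan[OF t], simp)
  also have "\<dots> = (\<Prod>h\<in>?H ` ?D. \<Prod>c\<in>{c\<in>?D. ?H c = h}. perm_pair_det \<Psi> {..<?H c})"
    by (rule prod.image_gen) simp
  also have "\<dots> = (\<Prod>h\<in>?H ` ?D. perm_pair_det \<Psi> {..<h} ^ column_count t h)"
  proof (rule prod.cong[OF refl])
    fix h
    have "(\<Prod>c\<in>{c\<in>?D. ?H c = h}. perm_pair_det \<Psi> {..<?H c}) = (\<Prod>c\<in>{c\<in>?D. ?H c = h}. perm_pair_det \<Psi> {..<h})"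
      by (rule prod.cong) auto
    then show "(\<Prod>c\<in>{c\<in>?D. ?H c = h}. perm_pair_det \<Psi> {..<?H c}) = perm_pair_det \<Psi> {..<h} ^ column_count t h"
      by (simp add: column_count_def)
  qed
  also have "\<dots> = (\<Prod>h\<in>{..a t}. perm_pair_det \<Psi> {..<h} ^ column_count t h)"
  proof (rule prod.mono_neutral_left)
    show "?H ` ?D \<subseteq> {..a t}" using card_column_rows_le by auto
    show "\<forall>h\<in>{..a t} - ?H ` ?D. perm_pair_det \<Psi> {..<h} ^ column_count t h = 1"
    proof
      fix h assume "h \<in> {..a t} - ?H ` ?D"
      then have "{c\<in>?D. ?H c = h} = {}" by auto
      then have "column_count t h = 0" unfolding column_count_def by (metis card.empty)
      then show "perm_pair_det \<Psi> {..<h} ^ column_count t h = 1" by simp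
    qed
  qed simp
  finally show ?thesis .
qed

lemma columns_of_height:
  assumes t: "t < r" and h: "1 \<le> h" "h \<le> a t"
  shows "{c \<in> {..<depth_tau a k t}. card (column_rows (lam_plus a k t) c) = h}
       = {(if h < a t then lam_plus a k t ! h else 0)..<lam_plus a k t ! (h - 1)}"
proof -
  let ?lp = "lam_plus a k t"
  let ?H = "\<lambda>c. card (column_rows ?lp c)"
  have mem: "j \<in> column_rows ?lp c \<longleftrightarrow> j < ?H c" for j c
    using column_rows_eq_lessThan[OF t, of c] by (metis lessThan_iff)
  have height: "?H c = h \<longleftrightarrow> c < ?lp ! (h - 1) \<and> \<not> (h < a t \<and> c < ?lp ! h)" for c
  proof -
    have "?H c = h \<longleftrightarrow> h - 1 < ?H c \<and> \<not> h < ?H c" using h by auto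
    also have "\<dots> \<longleftrightarrow> h - 1 \<in> column_rows ?lp c \<and> h \<notin> column_rows ?lp c" using mem by simp
    also have "\<dots> \<longleftrightarrow> c < ?lp ! (h - 1) \<and> \<not> (h < a t \<and> c < ?lp ! h)"
      using h by (simp add: column_rows_def) linarith
    finally show ?thesis .
  qed
  have bound: "?lp ! (h - 1) \<le> depth_tau a k t"
    using elem_le_sum_list[of "h - 1" ?lp] h sum_list_lam_plus[OF sw an t] by simp
  show ?thesis
  proof (rule Set.set_eqI)
    fix c
    show "c \<in> {c \<in> {..<depth_tau a k t}. ?H c = h} \<longleftrightarrow> c \<in> {(if h < a t then ?lp ! h else 0)..<?lp ! (h - 1)}"
      using height[of c] bound by (cases "h < a t") auto
  qed
qed

lemma column_count_eq:
  assumes t: "t < r" and h: "1 \<le> h" "h \<le> a t"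
  shows "int (column_count t h) = (if h < a t then k t h - k t (h + 1) else k t h)"
proof -
  have atn: "a t \<le> n" using an t by simp
  have count: "column_count t h = lam_plus a k t ! (h - 1) - (if h < a t then lam_plus a k t ! h else 0)"
    unfolding column_count_def columns_of_height[OF t h] by simp
  have top: "lam_plus a k t ! (h - 1) = nat (k t h)" and "0 \<le> k t h"
    using h weight_nonneg[OF sw an t, of h] atn by (simp_all add: nth_lam_plus)
  show ?thesis
  proof (cases "h < a t")
    case True
    have "lam_plus a k t ! h = nat (k t (h + 1))" using True by (simp add: nth_lam_plus)
    moreover have "0 \<le> k t (h + 1)" "k t (h + 1) \<le> k t h"
      using weight_nonneg[OF sw an t, of "h + 1"] weight_decreasing[OF sw an t, of h] h True atn by simp_all
    ultimately show ?thesis using True \<open>0 \<le> k t h\<close> unfolding count top by (simp add: nat_diff_distrib)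
  qed (use count top \<open>0 \<le> k t h\<close> in simp)
qed

lemma theta_symbol_eq_prod_det_powers: "theta_symbol r n a k x = (\<Prod>t<r. \<Prod>h\<in>{..a t}. perm_pair_det (block_matrix a x t) {..<h} ^ column_count t h)"
  unfolding theta_symbol_eq_prod_columns[OF sw an] by (rule prod.cong[OF refl]) (simp add: prod_columns_eq_prod_powers)

end

section \<open>Congruences of powers modulo a prime power\<close>

lemma euler_theorem_prime_power:
  fixes y :: int and p m :: nat
  assumes p: "prime p" and nd: "\<not> int p dvd y"
  shows "[y ^ (p ^ m * (p - 1)) = 1] (mod (int p ^ (m + 1)))"
proof -
  have "1 < int p" using prime_gt_1_nat[OF p] by simp
  then have "residues (int p ^ (m + 1))"
    by unfold_locales (rule one_less_power, simp_all)
  moreover have "coprime y (int p ^ (m + 1))"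
    using prime_imp_coprime[of "int p" y] p nd by (simp add: coprime_commute)
  ultimately have "[y ^ totient (nat (int p ^ (m + 1))) = 1] (mod (int p ^ (m + 1)))"
    by (rule residues.euler_theorem)
  moreover have "totient (nat (int p ^ (m + 1))) = p ^ m * (p - 1)"
    using totient_prime_power_Suc[OF p, of m] by (metis Suc_eq_plus1 nat_int of_nat_power)
  ultimately show ?thesis by simp
qed

lemma power_cong_less:
  fixes y :: int and u v m p :: nat
  assumes p: "prime p" and c: "[int u = int v] (mod (int p ^ m * (int p - 1)))" and uv: "u < v" and mu: "m < u"
  shows "[y ^ u = y ^ v] (mod int p ^ (m + 1))"
proof -
  let ?\<phi> = "p ^ m * (p - 1)"
  have "int p ^ m * (int p - 1) = int ?\<phi>" using prime_gt_0_nat[OF p] by (simp add: of_nat_diff)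
  then have "int ?\<phi> dvd int v - int u" using c by (metis cong_iff_dvd_diff cong_sym)
  then have "int ?\<phi> dvd int (v - u)" using uv by (simp add: of_nat_diff)
  then have "?\<phi> dvd v - u" by (simp only: int_dvd_int_iff)
  then obtain t where t: "v - u = ?\<phi> * t" by blast
  have v: "v = u + ?\<phi> * t" using t uv by simp
  show ?thesis
  proof (cases "int p dvd y")
    case True
    have "int p ^ (m + 1) dvd int p ^ u" by (rule le_imp_power_dvd) (use mu in simp)
    also have "\<dots> dvd y ^ u" using True by (rule dvd_power_same)
    finally have u0: "[y ^ u = 0] (mod int p ^ (m + 1))" by (simp add: cong_0_iff)
    have "int p ^ (m + 1) dvd int p ^ v" by (rule le_imp_power_dvd) (use mu uv in simp)
    also have "\<dots> dvd y ^ v" using True by (rule dvd_power_same)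
    finally have v0: "[y ^ v = 0] (mod int p ^ (m + 1))" by (simp add: cong_0_iff)
    show ?thesis using u0 v0 by (metis cong_sym cong_trans)
  next
    case False
    have e: "[y ^ ?\<phi> = 1] (mod int p ^ (m + 1))" by (rule euler_theorem_prime_power[OF p False])
    have "[(y ^ ?\<phi>) ^ t = 1 ^ t] (mod int p ^ (m + 1))" by (rule cong_pow[OF e])
    then have "[y ^ u * (y ^ ?\<phi>) ^ t = y ^ u * 1 ^ t] (mod int p ^ (m + 1))" by (rule cong_scalar_left)
    moreover have "y ^ u * (y ^ ?\<phi>) ^ t = y ^ v" by (simp only: v power_add power_mult)
    ultimately have "[y ^ v = y ^ u] (mod int p ^ (m + 1))" by simp
    then show ?thesis by (rule cong_sym)
  qed
qed

lemma power_cong_prime_power: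
  fixes y :: int and u v m p :: nat
  assumes p: "prime p" and c: "[int u = int v] (mod (int p ^ m * (int p - 1)))"
    and mu: "u \<noteq> v \<Longrightarrow> m < u \<and> m < v"
  shows "[y ^ u = y ^ v] (mod int p ^ (m + 1))"
proof (cases u v rule: linorder_cases)
  case less
  then show ?thesis using power_cong_less[OF p c less] mu by simp
next
  case equal
  then show ?thesis by simp
next
  case greater
  have "[y ^ v = y ^ u] (mod int p ^ (m + 1))"
    using power_cong_less[OF p cong_sym[OF c] greater] mu greater by simp
  then show ?thesis by (rule cong_sym)
qed

definition theta_kappa_coeffs :: "nat \<Rightarrow> nat \<Rightarrow> (nat \<Rightarrow> nat) \<Rightarrow> (nat \<Rightarrow> nat \<Rightarrow> int) \<Rightarrow> (var \<Rightarrow> nat) \<Rightarrow> int" where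
  "theta_kappa_coeffs r n a k = (\<lambda>J. \<Sum>l\<in>({0..<depth r a k} \<rightarrow>\<^sub>E Evee r n a). a_coef r n a k l * monomial_coeffs l (depth r a k) J)"

lemma theta_kappa_eq_binom_poly_op:
  assumes "set vs = Evee r n a" "distinct vs" "depth r a k \<le> D"
  shows "theta_kappa r n a k f \<alpha> = binom_poly_op vs (Evee r n a) D
     (theta_kappa_coeffs r n a k) f \<alpha>"
proof -
  let ?L = "{0..<depth r a k} \<rightarrow>\<^sub>E Evee r n a"
  have "theta_kappa r n a k f \<alpha> = (\<Sum>l\<in>?L. of_int (a_coef r n a k l) * binom_poly_op vs (Evee r n a) D (monomial_coeffs l (depth r a k)) f \<alpha>)"
    unfolding theta_kappa_def
  proof (rule sum.cong[OF refl])
    fix l assume l: "l \<in> ?L"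
    have "theta_seq l (depth r a k) f = binom_poly_op vs (Evee r n a) D (monomial_coeffs l (depth r a k)) f"
      by (rule theta_seq_eq_binom_poly_op) (use assms l finite_Evee in \<open>auto simp: PiE_iff\<close>)
    then show "of_int (a_coef r n a k l) * theta_seq l (depth r a k) f \<alpha>
        = of_int (a_coef r n a k l) * binom_poly_op vs (Evee r n a) D (monomial_coeffs l (depth r a k)) f \<alpha>" by simp
  qed
  also have "\<dots> = binom_poly_op vs (Evee r n a) D (\<lambda>J. \<Sum>l\<in>?L. a_coef r n a k l * monomial_coeffs l (depth r a k) J) f \<alpha>"
    by (rule sum_binom_poly_op)
  finally show ?thesis unfolding theta_kappa_coeffs_def .
qed

lemma binom_poly_value_theta_kappa:
  assumes "depth r a k \<le> D"
  shows "binom_poly_value (Evee r n a) D (theta_kappa_coeffs r n a k) x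
     = theta_symbol r n a k x"
proof -
  let ?L = "{0..<depth r a k} \<rightarrow>\<^sub>E Evee r n a"
  have "binom_poly_value (Evee r n a) D (\<lambda>J. \<Sum>l\<in>?L. a_coef r n a k l * monomial_coeffs l (depth r a k) J) x
      = (\<Sum>l\<in>?L. a_coef r n a k l * binom_poly_value (Evee r n a) D (monomial_coeffs l (depth r a k)) x)"
    by (rule sum_binom_poly_value[symmetric])
  also have "\<dots> = theta_symbol r n a k x"
    unfolding theta_symbol_def
  proof (rule sum.cong[OF refl])
    fix l assume l: "l \<in> ?L"
    have "binom_poly_value (Evee r n a) D (monomial_coeffs l (depth r a k)) x = (\<Prod>i<depth r a k. int (x (l i)))"
      by (rule binom_poly_value_monomial) (use assms l finite_Evee in \<open>auto simp: PiE_iff\<close>)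
    then show "a_coef r n a k l * binom_poly_value (Evee r n a) D (monomial_coeffs l (depth r a k)) x
        = a_coef r n a k l * (\<Prod>s<depth r a k. int (x (l s)))" by simp
  qed
  finally show ?thesis unfolding theta_kappa_coeffs_def .
qed

lemma theta_kappa_diff_dvd:
  fixes N :: nat and f :: "'c::comm_ring_1 pseries"
  assumes "\<And>x. [theta_symbol r n a k x = theta_symbol r n a k' x] (mod int N)"
  shows "\<exists>c. theta_kappa r n a k f \<alpha> - theta_kappa r n a k' f \<alpha> = of_nat N * c"
proof -
  let ?S = "Evee r n a" and ?C = "\<lambda>J. theta_kappa_coeffs r n a k J - theta_kappa_coeffs r n a k' J"
  define D where "D = max (depth r a k) (depth r a k')"
  have D: "depth r a k \<le> D" "depth r a k' \<le> D" by (simp_all add: D_def)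
  obtain vs where vs: "set vs = ?S" "distinct vs" using finite_distinct_list[OF finite_Evee] by blast
  have "int N dvd binom_poly_value ?S D ?C x" for x
    using assms[of x] binom_poly_value_theta_kappa[OF D(1)] binom_poly_value_theta_kappa[OF D(2)]
    by (simp add: binom_poly_value_diff[symmetric] cong_iff_dvd_diff)
  then have "int N dvd ?C J" if "J \<in> exponent_box ?S D" for J
    using binom_coeffs_dvd[OF finite_Evee _ that] by blast
  then have "\<exists>c. binom_poly_op vs ?S D ?C f \<alpha> = of_nat N * c"
    by (rule binom_poly_op_dvd)
  then show ?thesis
    by (simp only: theta_kappa_eq_binom_poly_op[OF vs D(1)] theta_kappa_eq_binom_poly_op[OF vs D(2)]
        binom_poly_op_diff)
qed

lemma column_count_cong:
  fixes k k' :: "nat \<Rightarrow> nat \<Rightarrow> int"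
  assumes an: "\<forall>t<r. a t \<le> n"
    and sw: "symmetric_weight r n a k" and sw': "symmetric_weight r n a k'"
    and cg: "\<forall>t<r. \<forall>i. 1 \<le> i \<and> i \<le> n \<longrightarrow> [k t i = k' t i] (mod M)"
    and h1: "\<forall>t<r. \<forall>i. 1 \<le> i \<and> i < a t \<and> k t i - k t (i+1) \<noteq> k' t i - k' t (i+1)
           \<longrightarrow> min (k t i - k t (i+1)) (k' t i - k' t (i+1)) > int m"
    and h2: "\<forall>t<r. 1 \<le> a t \<and> k t (a t) \<noteq> k' t (a t) \<longrightarrow> min (k t (a t)) (k' t (a t)) > int m"
    and t: "t < r" and h: "1 \<le> h" "h \<le> a t"
  shows "[int (column_count a k t h) = int (column_count a k' t h)] (mod M)"
    and "column_count a k t h \<noteq> column_count a k' t h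
           \<Longrightarrow> m < column_count a k t h \<and> m < column_count a k' t h"
proof -
  have atn: "a t \<le> n" using an t by simp
  note N = column_count_eq[OF sw an t h] column_count_eq[OF sw' an t h]
  show "[int (column_count a k t h) = int (column_count a k' t h)] (mod M)"
  proof (cases "h < a t")
    case True
    have "[k t h = k' t h] (mod M)" "[k t (h+1) = k' t (h+1)] (mod M)"
      using cg t h True atn by auto
    then show ?thesis unfolding N using True by (simp add: cong_diff)
  next
    case False
    have "[k t h = k' t h] (mod M)" using cg t h atn by auto
    then show ?thesis unfolding N using False by simp
  qed
  assume ne: "column_count a k t h \<noteq> column_count a k' t h"
  show "m < column_count a k t h \<and> m < column_count a k' t h"
  proof (cases "h < a t")
    case True
    then have "k t h - k t (h+1) \<noteq> k' t h - k' t (h+1)" using ne N by (metis of_nat_eq_iff)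
    then have "min (k t h - k t (h+1)) (k' t h - k' t (h+1)) > int m" using h1 t h True by auto
    then show ?thesis using N True by simp
  next
    case False
    then have ha: "h = a t" using h by simp
    then have "k t (a t) \<noteq> k' t (a t)" using ne N False by (metis of_nat_eq_iff)
    then have "min (k t (a t)) (k' t (a t)) > int m" using h2 t h ha by auto
    then show ?thesis using N False ha by simp
  qed
qed

lemma theta_symbol_cong:
  fixes r n m p :: nat and a :: "nat \<Rightarrow> nat" and k k' :: "nat \<Rightarrow> nat \<Rightarrow> int"
  assumes an: "\<forall>t<r. a t \<le> n"
    and p: "prime p"
    and sw: "symmetric_weight r n a k" and sw': "symmetric_weight r n a k'"
    and cg: "\<forall>t<r. \<forall>i. 1 \<le> i \<and> i \<le> n \<longrightarrow> [k t i = k' t i] (mod (int p ^ m * (int p - 1)))"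
    and h1: "\<forall>t<r. \<forall>i. 1 \<le> i \<and> i < a t \<and> k t i - k t (i+1) \<noteq> k' t i - k' t (i+1)
           \<longrightarrow> min (k t i - k t (i+1)) (k' t i - k' t (i+1)) > int m"
    and h2: "\<forall>t<r. 1 \<le> a t \<and> k t (a t) \<noteq> k' t (a t) \<longrightarrow> min (k t (a t)) (k' t (a t)) > int m"
  shows "[theta_symbol r n a k x = theta_symbol r n a k' x] (mod int p ^ (m + 1))"
  unfolding theta_symbol_eq_prod_det_powers[OF sw an] theta_symbol_eq_prod_det_powers[OF sw' an]
proof (intro cong_prod)
  fix t h assume t: "t \<in> {..<r}" and h: "h \<in> {..a t}"
  show "[perm_pair_det (block_matrix a x t) {..<h} ^ column_count a k t h
       = perm_pair_det (block_matrix a x t) {..<h} ^ column_count a k' t h] (mod int p ^ (m + 1))"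
  proof (cases "h = 0")
    case False
    then have "1 \<le> h" "h \<le> a t" using h by auto
    note count = column_count_cong[OF an sw sw' cg h1 h2 _ this] 
    show ?thesis
      by (rule power_cong_prime_power[OF p]) (use count t in auto)
  qed (simp add: perm_pair_det_empty)
qed

theorem mainTheorem8:
  fixes r n m p :: nat and a :: "nat \<Rightarrow> nat" and k k' :: "nat \<Rightarrow> nat \<Rightarrow> int"
  assumes "0 < r" and "0 < n"
    and "\<forall>t<r. a t \<le> n"
    and "prime p" and "n < p"
    and "symmetric_weight r n a k" and "symmetric_weight r n a k'"
    and "1 \<le> m"
    and "\<forall>t<r. \<forall>i. 1 \<le> i \<and> i \<le> n \<longrightarrow> [k t i = k' t i] (mod (int p ^ m * (int p - 1)))"
    and "\<forall>t<r. \<forall>i. 1 \<le> i \<and> i < a t \<and> k t i - k t (i+1) \<noteq> k' t i - k' t (i+1)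
           \<longrightarrow> min (k t i - k t (i+1)) (k' t i - k' t (i+1)) > int m"
    and "\<forall>t<r. 1 \<le> a t \<and> k t (a t) \<noteq> k' t (a t) \<longrightarrow> min (k t (a t)) (k' t (a t)) > int m"
  shows "\<forall>(f :: 'c::comm_ring_1 pseries) \<alpha>. (\<forall>x. x \<notin> Evee r n a \<longrightarrow> \<alpha> x = 0) \<longrightarrow>
           (\<exists>c. theta_kappa r n a k f \<alpha> - theta_kappa r n a k' f \<alpha> = of_nat (p ^ (m+1)) * c)"
proof (intro allI impI)
  fix f :: "'c pseries" and \<alpha> :: "var \<Rightarrow> nat"
  have "[theta_symbol r n a k x = theta_symbol r n a k' x] (mod int (p ^ (m + 1)))" for x
    using theta_symbol_cong[OF assms(3,4,6,7,9,10,11)] by simp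
  then show "\<exists>c. theta_kappa r n a k f \<alpha> - theta_kappa r n a k' f \<alpha> = of_nat (p ^ (m + 1)) * c"
    by (rule theta_kappa_diff_dvd)
qed

end
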